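(* Let $\mathbf{A}$ be a finite metric space and let $p,q$ be partial isometries of $\mathbf{A}$ with $\mathrm{Per}(p)=\mathrm{Fix}(p)$, $\mathrm{Per}(q)=\mathrm{Fix}(q)$ and $\mathrm{Fix}(p)\cap\mathrm{Fix}(q)\neq\emptyset$. Then there exist a finite metric space $(\mathbf{B},d)$ containing $\mathbf{A}$ as a metric subspace, partial isometries $\bar p\supseteq p$ and $\bar q\supseteq q$ of $\mathbf{B}$, and a reduced word $w=t^Kv\in F(s,t)$ with $K\neq0$ (the product $t^Kv$ reduced) such that: (i) $\mathrm{Per}(\bar p)=\mathrm{Per}(p)$ and $\mathrm{Per}(\bar q)=\mathrm{Per}(q)$; (ii) $w(\bar p,\bar q)(a)$ is defined for every $a\in\mathbf{A}$, and $\mathrm{dom}(\bar p)\cup w(\bar p,\bar q)(\mathbf{A})$ is the free amalgam of $\mathrm{dom}(\bar p)$ and $w(\bar p,\bar q)(\mathbf{A})$ over $\mathrm{Fix}(p)\cap\mathrm{Fix}(q)$, i.e. for all $x\in w(\bar p,\bar q)(\mathbf{A})$ and $y\in\mathrm{dom}(\bar p)$, $$d(x,y)=\min\{d(x,z)+d(z,y): z\in\mathrm{Fix}(p)\cap\mathrm{Fix}(q)\}.$$ Moreover, all distances in $\mathbf{B}$ lie in the additive semigroup generated by the distances in $\mathbf{A}$; in particular $\mathrm{den}(\mathrm{dom}(\bar p)\cup\mathbf{A})=\mathrm{den}(\mathbf{A})=\mathrm{den}(\mathrm{dom}(\bar q)\cup\mathbf{A})$.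
   Context: A partial isometry of a metric space $\mathbf{C}$ is an isometry $p$ between finite subsets $\mathrm{dom}(p),\mathrm{ran}(p)\subseteq\mathbf{C}$; $\bar p\supseteq p$ means $\bar p$ extends $p$. $\mathrm{Fix}(p)=\{x\in\mathrm{dom}(p):p(x)=x\}$. A point $x\in\mathrm{dom}(p)$ is periodic if there is $n>0$ with $x,p(x),\dots,p^n(x)\in\mathrm{dom}(p)$ (all defined) and $p^n(x)=x$; $\mathrm{Per}(p)$ is the set of periodic points. For a finite metric space with at least two points, $\mathrm{den}$ is the minimal distance between two distinct points. $F(s,t)$ is the free group on $s,t$; for a reduced word $w=t^{n_k}s^{m_k}\cdots t^{n_1}s^{m_1}$ and partial maps $p,q$, $w(p,q)(c)=q^{n_k}p^{m_k}\cdots q^{n_1}p^{m_1}(c)$ whenever the right-hand side is defined (the rightmost letter acts first). *)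

theory Defs
  imports Complex_Main
begin

text \<open>A finite metric space is represented by a carrier set X together with a
  distance function d (only its values on X matter).\<close>
definition metric_on :: "'a set \<Rightarrow> ('a \<Rightarrow> 'a \<Rightarrow> real) \<Rightarrow> bool" where
  "metric_on X d \<longleftrightarrow>
     (\<forall>x\<in>X. \<forall>y\<in>X. 0 \<le> d x y \<and> (d x y = 0 \<longleftrightarrow> x = y) \<and> d x y = d y x) \<and>
     (\<forall>x\<in>X. \<forall>y\<in>X. \<forall>z\<in>X. d x z \<le> d x y + d y z)"

definition partial_isometry :: "'a set \<Rightarrow> ('a \<Rightarrow> 'a \<Rightarrow> real) \<Rightarrow> ('a \<rightharpoonup> 'a) \<Rightarrow> bool" where
  "partial_isometry X d p \<longleftrightarrow>
     finite (dom p) \<and> dom p \<subseteq> X \<and> ran p \<subseteq> X \<and> inj_on p (dom p) \<and>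
     (\<forall>x\<in>dom p. \<forall>y\<in>dom p. d (the (p x)) (the (p y)) = d x y)"

primrec pit :: "('a \<rightharpoonup> 'a) \<Rightarrow> nat \<Rightarrow> 'a \<Rightarrow> 'a option" where
  "pit p 0 x = Some x"
| "pit p (Suc n) x = Option.bind (pit p n x) p"

definition Fix :: "('a \<rightharpoonup> 'a) \<Rightarrow> 'a set" where
  "Fix p = {x. p x = Some x}"

definition Per :: "('a \<rightharpoonup> 'a) \<Rightarrow> 'a set" where
  "Per p = {x \<in> dom p. \<exists>n>0. pit p n x = Some x}"

definition pinv :: "('a \<rightharpoonup> 'a) \<Rightarrow> ('a \<rightharpoonup> 'a)" where
  "pinv p y = (if \<exists>x. p x = Some y then Some (THE x. p x = Some y) else None)"

definition ppow :: "('a \<rightharpoonup> 'a) \<Rightarrow> int \<Rightarrow> ('a \<rightharpoonup> 'a)" where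
  "ppow p n = (if 0 \<le> n then pit p (nat n) else pit (pinv p) (nat (- n)))"

text \<open>Words in the free group F(s,t): lists of syllables (generator, exponent),
  written left to right; the rightmost syllable acts first.\<close>
datatype gen = S | T

definition reduced_word :: "(gen \<times> int) list \<Rightarrow> bool" where
  "reduced_word w \<longleftrightarrow>
     (\<forall>i<length w. snd (w ! i) \<noteq> 0) \<and>
     (\<forall>i. Suc i < length w \<longrightarrow> fst (w ! i) \<noteq> fst (w ! Suc i))"

primrec eval_word :: "(gen \<times> int) list \<Rightarrow> ('a \<rightharpoonup> 'a) \<Rightarrow> ('a \<rightharpoonup> 'a) \<Rightarrow> 'a \<Rightarrow> 'a option" where
  "eval_word [] p q c = Some c"
| "eval_word (g # w) p q c =
     Option.bind (eval_word w p q c) (ppow (if fst g = S then p else q) (snd g))"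

inductive_set add_semigroup_gen :: "real set \<Rightarrow> real set" for G where
  base: "x \<in> G \<Longrightarrow> x \<in> add_semigroup_gen G"
| plus: "x \<in> add_semigroup_gen G \<Longrightarrow> y \<in> add_semigroup_gen G \<Longrightarrow> x + y \<in> add_semigroup_gen G"

definition den :: "'a set \<Rightarrow> ('a \<Rightarrow> 'a \<Rightarrow> real) \<Rightarrow> real" where
  "den X d = Min {d x y | x y. x \<in> X \<and> y \<in> X \<and> x \<noteq> y}"

end

theory Submission
  imports Defs
begin

text \<open>Work in the type 'a + nat, where A is copied as Inl ` A and fresh points
  are available.  The basic tool is the unrolling lemma: a partial isometry f of a finite metric
  space X whose periodic points are fixed can be extended so that N iterations of f are defined
  on X.  The new points are tails attached to the endpoints of the f-orbits, and the new metric
  is the path metric of the graph X \<times> \<int> in which every f-step descends one layer at cost 0.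
  A potential argument shows that f^N(x) is then far from X, except along paths through a
  fixed point of f; no new periodic points appear, and all distances stay in the additive
  semigroup generated by the old ones.

  The construction alternates unrolling p and q for rapidly growing numbers of steps.  After m
  rounds the word w of length 2m maps every a \<in> A to a point whose distance to the relevant
  points is at least the free amalgam distance over F = Fix p \<inter> Fix q or m \<delta>, where \<delta> bounds
  the nonzero distances from below.  Once m \<delta> exceeds twice the diameter of A this lower bound
  is the free amalgam distance itself, which is also an upper bound.\<close>

section \<open>Walks with edge costs\<close>

fun is_walk :: "('v \<Rightarrow> 'v \<Rightarrow> bool) \<Rightarrow> 'v list \<Rightarrow> bool" where
  "is_walk R (a # b # xs) = (R a b \<and> is_walk R (b # xs))"
| "is_walk R _ = True"

fun walk_length :: "('v \<Rightarrow> 'v \<Rightarrow> real) \<Rightarrow> 'v list \<Rightarrow> real" where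
  "walk_length c (a # b # xs) = c a b + walk_length c (b # xs)"
| "walk_length c _ = 0"

lemma is_walk_Cons: "is_walk R (a # xs) \<longleftrightarrow> (xs = [] \<or> (R a (hd xs) \<and> is_walk R xs))"
  by (cases xs) auto

lemma walk_length_Cons:
  "walk_length c (a # xs) = (if xs = [] then 0 else c a (hd xs) + walk_length c xs)"
  by (cases xs) auto

lemma walk_append:
  assumes "xs \<noteq> []" "ys \<noteq> []" "last xs = hd ys" "is_walk R xs" "is_walk R ys"
  shows "is_walk R (xs @ tl ys) \<and> walk_length c (xs @ tl ys) = walk_length c xs + walk_length c ys"
  using assms
proof (induction xs)
  case Nil then show ?case by simp
next
  case (Cons a xs)
  show ?case
  proof (cases "xs = []")
    case True
    then show ?thesis using Cons.prems by (cases ys) auto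
  next
    case False
    then have "is_walk R (xs @ tl ys) \<and> walk_length c (xs @ tl ys) = walk_length c xs + walk_length c ys"
      using Cons by (simp add: is_walk_Cons)
    then show ?thesis using False Cons.prems
      by (simp add: is_walk_Cons walk_length_Cons hd_append)
  qed
qed

lemma walk_rev:
  assumes "\<And>u v. R u v \<Longrightarrow> R v u" "\<And>u v. R u v \<Longrightarrow> c v u = c u v"
  shows "is_walk R xs \<Longrightarrow> is_walk R (rev xs) \<and> walk_length c (rev xs) = walk_length c xs"
proof (induction xs)
  case Nil then show ?case by simp
next
  case (Cons a xs)
  show ?case
  proof (cases "xs = []")
    case True then show ?thesis by simp
  next
    case False
    have IH: "is_walk R (rev xs) \<and> walk_length c (rev xs) = walk_length c xs"
      using Cons False by (simp add: is_walk_Cons)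
    have step: "R a (hd xs)" using Cons.prems False by (simp add: is_walk_Cons)
    have "is_walk R (rev xs @ tl [hd xs, a]) \<and>
        walk_length c (rev xs @ tl [hd xs, a]) = walk_length c (rev xs) + walk_length c [hd xs, a]"
      by (rule walk_append) (use False IH step assms(1) in \<open>auto simp: last_rev\<close>)
    then show ?thesis using IH step assms(2) False by (simp add: walk_length_Cons)
  qed
qed

text \<open>A potential that decreases by at most the cost of each step bounds the length of a walk
  from below: this is how lower bounds on path distances are proved.\<close>
lemma walk_potential:
  assumes "\<And>u v. R u v \<Longrightarrow> \<psi> u \<le> \<psi> v + c u v"
  shows "is_walk R xs \<Longrightarrow> xs \<noteq> [] \<Longrightarrow> \<psi> (hd xs) \<le> \<psi> (last xs) + walk_length c xs"
proof (induction xs)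
  case Nil then show ?case by simp
next
  case (Cons a xs)
  then show ?case
    by (cases "xs = []") (auto simp: is_walk_Cons walk_length_Cons intro: order_trans[OF assms])
qed

lemma walk_map:
  assumes "\<And>u v. R u v \<Longrightarrow> R' (g u) (g v)" "\<And>u v. R u v \<Longrightarrow> c' (g u) (g v) = c u v"
  shows "is_walk R xs \<Longrightarrow> is_walk R' (map g xs) \<and> walk_length c' (map g xs) = walk_length c xs"
proof (induction xs)
  case Nil then show ?case by simp
next
  case (Cons a xs)
  then show ?case
    by (cases "xs = []") (auto simp: is_walk_Cons walk_length_Cons assms hd_map)
qed

lemma walk_length_sum_list:
  assumes "\<And>u v. R u v \<Longrightarrow> c u v \<in> G"
  shows "is_walk R xs \<Longrightarrow> \<exists>ys. set ys \<subseteq> G \<and> walk_length c xs = sum_list ys"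
proof (induction xs)
  case Nil then show ?case by (intro exI[of _ "[]"]) simp
next
  case (Cons a xs)
  show ?case
  proof (cases "xs = []")
    case True then show ?thesis by (intro exI[of _ "[]"]) simp
  next
    case False
    then obtain ys where "set ys \<subseteq> G" "walk_length c xs = sum_list ys"
      using Cons by (auto simp: is_walk_Cons)
    then show ?thesis using False Cons.prems assms
      by (intro exI[of _ "c a (hd xs) # ys"]) (auto simp: is_walk_Cons walk_length_Cons)
  qed
qed

section \<open>Iterating partial maps\<close>

lemma pit_Suc_first: "pit f (Suc n) x = (case f x of None \<Rightarrow> None | Some y \<Rightarrow> pit f n y)"
proof (induction n arbitrary: x)
  case 0 then show ?case by (cases "f x") auto
next
  case (Suc n)
  show ?case using Suc[of x] by (cases "f x") (auto split: option.splits)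
qed

lemma pit_SucE: "pit f (Suc n) x = Some v \<Longrightarrow> \<exists>w. pit f n x = Some w \<and> f w = Some v"
  by (cases "pit f n x") auto

lemma pit_pos_dom: assumes "0 < n" "pit f n x \<noteq> None" shows "x \<in> dom f"
proof (cases n)
  case (Suc k)
  then show ?thesis using assms(2) pit_Suc_first[of f k x] by (auto split: option.splits)
qed (use assms(1) in simp)

lemma pit_in_ran: "pit f (Suc n) x = Some y \<Longrightarrow> y \<in> ran f"
  using pit_SucE by (fastforce simp: ran_def)

lemma pit_mono: "f \<subseteq>\<^sub>m g \<Longrightarrow> pit f n x = Some y \<Longrightarrow> pit g n x = Some y"
proof (induction n arbitrary: y)
  case 0 then show ?case by simp
next
  case (Suc n)
  obtain w where w: "pit f n x = Some w" "f w = Some y" using pit_SucE[OF Suc.prems(2)] by blast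
  have "g w = Some y" using Suc.prems(1) w(2) unfolding map_le_def by force
  then show ?case using Suc.IH[OF Suc.prems(1) w(1)] by simp
qed

lemma Fix_sub_Per: "Fix f \<subseteq> Per f"
  unfolding Fix_def Per_def by (auto intro!: exI[of _ 1])

lemma pit_dist_fix:
  assumes "partial_isometry X d f" "z \<in> Fix f"
  shows "pit f n u = Some v \<Longrightarrow> d v z = d u z"
proof (induction n arbitrary: v)
  case 0 then show ?case by simp
next
  case (Suc n)
  obtain w where w: "pit f n u = Some w" "f w = Some v" using pit_SucE[OF Suc.prems] by blast
  have fz: "f z = Some z" using assms(2) by (auto simp: Fix_def)
  have "d (the (f w)) (the (f z)) = d w z"
    using assms(1) w(2) fz unfolding partial_isometry_def by (meson domI)
  then show ?case using w Suc.IH[of w] fz by simp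
qed

lemma ppow_nat: "ppow f (int n) = pit f n"
  unfolding ppow_def by simp

lemma eval_word_mono:
  assumes "\<forall>g\<in>set w. 0 < snd g" "p \<subseteq>\<^sub>m p'" "q \<subseteq>\<^sub>m q'"
  shows "eval_word w p q c = Some x \<Longrightarrow> eval_word w p' q' c = Some x"
  using assms(1)
proof (induction w arbitrary: x)
  case Nil then show ?case by simp
next
  case (Cons g w)
  obtain y where y: "eval_word w p q c = Some y" "ppow (if fst g = S then p else q) (snd g) y = Some x"
    using Cons.prems(1) by (cases "eval_word w p q c") auto
  have y': "eval_word w p' q' c = Some y" using Cons.IH[OF y(1)] Cons.prems(2) by simp
  have pos: "0 \<le> snd g" using Cons.prems(2) by auto
  have le: "(if fst g = S then p else q) \<subseteq>\<^sub>m (if fst g = S then p' else q')"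
    using assms(2,3) by simp
  have "pit (if fst g = S then p else q) (nat (snd g)) y = Some x" using y(2) pos by (simp add: ppow_def)
  then have "pit (if fst g = S then p' else q') (nat (snd g)) y = Some x" by (rule pit_mono[OF le])
  then show ?case using y' pos by (simp add: ppow_def)
qed

lemma reduced_word_Cons2:
  assumes "reduced_word w" "w = [] \<or> fst (hd w) = T" "K \<noteq> 0" "L \<noteq> 0"
  shows "reduced_word ((T, K) # (S, L) # w)"
  unfolding reduced_word_def
proof (intro conjI allI impI)
  fix i assume i: "i < length ((T, K) # (S, L) # w)"
  show "snd (((T, K) # (S, L) # w) ! i) \<noteq> 0"
  proof (cases i)
    case (Suc j)
    then show ?thesis using assms i unfolding reduced_word_def by (cases j) auto
  qed (use assms in simp)
next
  fix i assume i: "Suc i < length ((T, K) # (S, L) # w)"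
  show "fst (((T, K) # (S, L) # w) ! i) \<noteq> fst (((T, K) # (S, L) # w) ! Suc i)"
  proof (cases "i \<le> 1")
    case True
    then show ?thesis using i assms(2) by (cases i; cases w) auto
  next
    case False
    then obtain k where "i = Suc (Suc k)" by (cases i; cases "i - 1") auto
    then show ?thesis using assms(1) i unfolding reduced_word_def by auto
  qed
qed

section \<open>Distances in the additive semigroup generated by a set of reals\<close>

lemma add_semigroup_gen_sum_list:
  "set ys \<subseteq> G \<Longrightarrow> ys \<noteq> [] \<Longrightarrow> sum_list ys \<in> add_semigroup_gen G"
proof (induction ys)
  case Nil then show ?case by simp
next
  case (Cons a ys)
  then show ?case by (cases "ys = []") (auto intro: add_semigroup_gen.intros)
qed

lemma add_semigroup_gen_mono:
  "x \<in> add_semigroup_gen G \<Longrightarrow> G \<subseteq> add_semigroup_gen H \<Longrightarrow> x \<in> add_semigroup_gen H"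
  by (induction rule: add_semigroup_gen.induct) (auto intro: add_semigroup_gen.intros)

lemma add_semigroup_gen_lower:
  "x \<in> add_semigroup_gen G \<Longrightarrow> \<forall>g\<in>G. g = 0 \<or> \<delta> \<le> g \<Longrightarrow> \<delta> > 0 \<Longrightarrow> x = 0 \<or> \<delta> \<le> x"
  by (induction rule: add_semigroup_gen.induct) auto

lemma add_semigroup_gen_zero: "x \<in> add_semigroup_gen G \<Longrightarrow> \<forall>g\<in>G. g = 0 \<Longrightarrow> x = 0"
  by (induction rule: add_semigroup_gen.induct) auto

lemma sum_list_ge_length: "\<forall>z\<in>set zs. \<delta> \<le> z \<Longrightarrow> real (length zs) * \<delta> \<le> sum_list zs"
  by (induction zs) (auto simp: algebra_simps)

text \<open>Discreteness: a finite set of generators which are 0 or at least \<open>\<delta> > 0\<close> has only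
  finitely many sums below any bound.  This makes infima of walk lengths attained.\<close>
lemma finite_bounded_sums:
  fixes G :: "real set"
  assumes "finite G" "\<forall>g\<in>G. g = 0 \<or> \<delta> \<le> g" "\<delta> > 0"
  shows "finite {s. \<exists>ys. set ys \<subseteq> G \<and> s = sum_list ys \<and> s \<le> b}"
proof -
  let ?n = "nat \<lceil>b / \<delta>\<rceil>"
  have "{s. \<exists>ys. set ys \<subseteq> G \<and> s = sum_list ys \<and> s \<le> b} \<subseteq>
      sum_list ` {zs. set zs \<subseteq> G \<and> length zs \<le> ?n}"
  proof
    fix s assume "s \<in> {s. \<exists>ys. set ys \<subseteq> G \<and> s = sum_list ys \<and> s \<le> b}"
    then obtain ys where ys: "set ys \<subseteq> G" "s = sum_list ys" "s \<le> b" by auto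
    let ?zs = "filter (\<lambda>x. x \<noteq> 0) ys"
    have sum_eq: "sum_list ?zs = sum_list ys" by (induction ys) auto
    have "\<forall>z\<in>set ?zs. \<delta> \<le> z" using ys assms(2) by auto
    then have "real (length ?zs) * \<delta> \<le> sum_list ?zs" by (rule sum_list_ge_length)
    then have "real (length ?zs) \<le> b / \<delta>" using sum_eq ys assms(3) by (simp add: pos_le_divide_eq)
    then have "length ?zs \<le> ?n" by linarith
    then show "s \<in> sum_list ` {zs. set zs \<subseteq> G \<and> length zs \<le> ?n}"
      using sum_eq ys by (auto intro!: image_eqI[of _ _ ?zs])
  qed
  moreover have "finite {zs. set zs \<subseteq> G \<and> length zs \<le> ?n}"
    using finite_lists_length_le[OF assms(1)] by blast
  ultimately show ?thesis by (rule finite_subset[OF _ finite_imageI])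
qed

lemma metric_on_subset: "metric_on Y d \<Longrightarrow> Z \<subseteq> Y \<Longrightarrow> metric_on Z d"
  unfolding metric_on_def by blast

lemma metric_positive_lower_bound:
  assumes "finite A" "metric_on A d"
  shows "\<exists>\<delta>>0. \<forall>a\<in>A. \<forall>b\<in>A. a \<noteq> b \<longrightarrow> \<delta> \<le> d a b"
proof -
  let ?D = "insert 1 {d a b | a b. a \<in> A \<and> b \<in> A \<and> a \<noteq> b}"
  have "?D \<subseteq> insert 1 ((\<lambda>(a, b). d a b) ` (A \<times> A))" by auto
  then have fin: "finite ?D"
    by (rule finite_subset) (use assms(1) in simp)
  have pos: "0 < x" if "x \<in> ?D" for x
    using that assms(2) unfolding metric_on_def by fastforce
  have "0 < Min ?D" using Min_in[OF fin] pos by blast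
  moreover have "Min ?D \<le> d a b" if "a \<in> A" "b \<in> A" "a \<noteq> b" for a b
    using Min_le[OF fin] that by blast
  ultimately show ?thesis by blast
qed

lemma semigroup_extension_subsingleton:
  assumes met: "metric_on Y d" and "X \<subseteq> Y" and X: "\<forall>x\<in>X. \<forall>y\<in>X. x = y"
    and sg: "\<forall>x\<in>Y. \<forall>y\<in>Y. d x y \<in> add_semigroup_gen {d a b | a b. a \<in> X \<and> b \<in> X}"
  shows "\<forall>x\<in>Y. \<forall>y\<in>Y. x = y"
proof -
  have "\<forall>g\<in>{d a b | a b. a \<in> X \<and> b \<in> X}. g = 0"
    using met assms(2) X unfolding metric_on_def by blast
  then have "d x y = 0" if "x \<in> Y" "y \<in> Y" for x y
    using add_semigroup_gen_zero sg that by blast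
  then show ?thesis using met unfolding metric_on_def by blast
qed

lemma den_semigroup_extension:
  assumes "finite Y" and met: "metric_on Y d" and "X \<subseteq> Y"
    and sg: "\<forall>x\<in>Y. \<forall>y\<in>Y. d x y \<in> add_semigroup_gen {d a b | a b. a \<in> X \<and> b \<in> X}"
  shows "den Y d = den X d"
proof -
  let ?G = "{d a b | a b. a \<in> X \<and> b \<in> X}"
  let ?DY = "{d x y | x y. x \<in> Y \<and> y \<in> Y \<and> x \<noteq> y}"
  let ?DX = "{d x y | x y. x \<in> X \<and> y \<in> X \<and> x \<noteq> y}"
  have "?DY \<subseteq> (\<lambda>(x, y). d x y) ` (Y \<times> Y)" by auto
  then have finY: "finite ?DY" by (rule finite_subset) (use assms(1) in simp)
  have "?DX \<subseteq> ?DY" using assms(3) by blast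
  then have finX: "finite ?DX" using finY by (rule finite_subset)
  have pos: "0 < d x y" if "x \<in> Y" "y \<in> Y" "x \<noteq> y" for x y
    using met that unfolding metric_on_def by (metis order_le_less)
  show ?thesis
  proof (cases "?DX = {}")
    case True
    then have "\<forall>x\<in>Y. \<forall>y\<in>Y. x = y"
      using semigroup_extension_subsingleton[OF met assms(3) _ sg] by blast
    then have DY_empty: "?DY = {}" by auto
    show ?thesis unfolding den_def DY_empty True ..
  next
    case False
    let ?\<delta> = "Min ?DX"
    have \<delta>_in: "?\<delta> \<in> ?DX" using Min_in[OF finX False] .
    then obtain x y where "x \<in> X" "y \<in> X" "x \<noteq> y" "?\<delta> = d x y" by blast
    then have \<delta>_pos: "0 < ?\<delta>" using pos assms(3) by auto
    have gen: "\<forall>g\<in>?G. g = 0 \<or> ?\<delta> \<le> g"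
    proof
      fix g assume "g \<in> ?G"
      then obtain a b where ab: "a \<in> X" "b \<in> X" "g = d a b" by blast
      show "g = 0 \<or> ?\<delta> \<le> g"
      proof (cases "a = b")
        case True then show ?thesis using ab met assms(3) unfolding metric_on_def by auto
      next
        case False
        then have "g \<in> ?DX" using ab by blast
        then show ?thesis using Min_le[OF finX] by simp
      qed
    qed
    have lower: "?\<delta> \<le> t" if "t \<in> ?DY" for t
    proof -
      obtain x y where xy: "x \<in> Y" "y \<in> Y" "x \<noteq> y" "t = d x y" using \<open>t \<in> ?DY\<close> by blast
      have "d x y \<in> add_semigroup_gen ?G" using sg xy(1,2) by blast
      then have "d x y = 0 \<or> ?\<delta> \<le> d x y" using add_semigroup_gen_lower gen \<delta>_pos by blast
      then show ?thesis using pos[OF xy(1-3)] xy(4) by auto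
    qed
    have "?\<delta> \<in> ?DY" using \<delta>_in assms(3) by blast
    then have "Min ?DY = ?\<delta>" using Min_eqI[OF finY lower] by blast
    then show ?thesis by (simp add: den_def)
  qed
qed

section \<open>Unrolling a partial isometry\<close>

text \<open>The extension is obtained from the graph on
  X \<times> \<int> whose layers are copies of X (edges of cost d) and in which each f-step leads
  one layer down (edges of cost 0); the new metric is the path metric of this graph.\<close>

locale unroll_base =
  fixes X :: "'b set" and d :: "'b \<Rightarrow> 'b \<Rightarrow> real" and f :: "'b \<rightharpoonup> 'b" and \<delta> :: real
  assumes finX: "finite X" and met: "metric_on X d" and iso: "partial_isometry X d f"
    and Per_Fix: "Per f = Fix f" and Fix_ne: "Fix f \<noteq> {}" and dpos: "\<delta> > 0"
    and dist_ge_delta: "\<And>a b. a \<in> X \<Longrightarrow> b \<in> X \<Longrightarrow> a \<noteq> b \<Longrightarrow> \<delta> \<le> d a b"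
begin

lemma domf: "dom f \<subseteq> X" using iso unfolding partial_isometry_def by auto
lemma ranf: "ran f \<subseteq> X" using iso unfolding partial_isometry_def by auto
lemma findom: "finite (dom f)" using iso unfolding partial_isometry_def by auto
lemma injf: "inj_on f (dom f)" using iso unfolding partial_isometry_def by auto
lemma isof: "a \<in> dom f \<Longrightarrow> b \<in> dom f \<Longrightarrow> d (the (f a)) (the (f b)) = d a b"
  using iso unfolding partial_isometry_def by auto
lemma fX: "f a = Some b \<Longrightarrow> b \<in> X" using ranf by (auto simp: ran_def)
lemma f_isometric: "f a = Some a' \<Longrightarrow> f b = Some b' \<Longrightarrow> d a' b' = d a b"
  using isof[of a b] by auto
lemma f_inj: "f a = Some c \<Longrightarrow> f b = Some c \<Longrightarrow> a = b"
  by (metis domI inj_onD injf)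
lemma FixX: "z \<in> Fix f \<Longrightarrow> z \<in> X" using domf by (auto simp: Fix_def)
lemma Fixf: "z \<in> Fix f \<Longrightarrow> f z = Some z" by (auto simp: Fix_def)

lemma dnn: "a \<in> X \<Longrightarrow> b \<in> X \<Longrightarrow> 0 \<le> d a b" using met unfolding metric_on_def by auto
lemma d0: "a \<in> X \<Longrightarrow> d a a = 0" using met unfolding metric_on_def by auto
lemma d0iff: "a \<in> X \<Longrightarrow> b \<in> X \<Longrightarrow> d a b = 0 \<longleftrightarrow> a = b" using met unfolding metric_on_def by auto
lemma dsym: "a \<in> X \<Longrightarrow> b \<in> X \<Longrightarrow> d a b = d b a" using met unfolding metric_on_def by auto
lemma dtri: "a \<in> X \<Longrightarrow> b \<in> X \<Longrightarrow> c \<in> X \<Longrightarrow> d a c \<le> d a b + d b c"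
  using met unfolding metric_on_def by auto

definition edge :: "('b \<times> int) \<Rightarrow> ('b \<times> int) \<Rightarrow> bool" where
  "edge u v \<longleftrightarrow> fst u \<in> X \<and> fst v \<in> X \<and> (snd v = snd u \<or> (snd v = snd u - 1 \<and> f (fst u) = Some (fst v))
     \<or> (snd v = snd u + 1 \<and> f (fst v) = Some (fst u)))"

definition cost :: "('b \<times> int) \<Rightarrow> ('b \<times> int) \<Rightarrow> real" where
  "cost u v = (if snd u = snd v then d (fst u) (fst v) else 0)"

definition walks :: "('b \<times> int) \<Rightarrow> ('b \<times> int) \<Rightarrow> ('b \<times> int) list set" where
  "walks u v = {xs. xs \<noteq> [] \<and> hd xs = u \<and> last xs = v \<and> is_walk edge xs \<and> fst u \<in> X}"

definition gdist :: "('b \<times> int) \<Rightarrow> ('b \<times> int) \<Rightarrow> real" where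
  "gdist u v = Inf (walk_length cost ` walks u v)"

lemma edge_sym: "edge u v \<Longrightarrow> edge v u"
  unfolding edge_def by auto

lemma cost_sym: "edge u v \<Longrightarrow> cost v u = cost u v"
  unfolding edge_def cost_def using dsym by auto

lemma cost_nn: "edge u v \<Longrightarrow> 0 \<le> cost u v"
  unfolding edge_def cost_def using dnn by auto

lemma walk_length_nonneg: "is_walk edge xs \<Longrightarrow> xs \<noteq> [] \<Longrightarrow> 0 \<le> walk_length cost xs"
  using walk_potential[of edge "\<lambda>_. 0" cost xs] cost_nn by auto

lemma walks_last: "xs \<in> walks u v \<Longrightarrow> fst v \<in> X"
proof -
  assume a: "xs \<in> walks u v"
  have "is_walk edge xs \<Longrightarrow> xs \<noteq> [] \<Longrightarrow> fst (hd xs) \<in> X \<Longrightarrow> fst (last xs) \<in> X" for xs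
  proof (induction xs)
    case Nil then show ?case by simp
  next
    case (Cons a xs) then show ?case by (cases "xs = []") (auto simp: is_walk_Cons edge_def)
  qed
  then show ?thesis using a unfolding walks_def by auto
qed

lemma walks_append: "xs \<in> walks u v \<Longrightarrow> ys \<in> walks v w \<Longrightarrow>
    xs @ tl ys \<in> walks u w \<and> walk_length cost (xs @ tl ys) = walk_length cost xs + walk_length cost ys"
proof -
  assume a: "xs \<in> walks u v" "ys \<in> walks v w"
  have c: "is_walk edge (xs @ tl ys) \<and> walk_length cost (xs @ tl ys) = walk_length cost xs + walk_length cost ys"
    using a by (intro walk_append) (auto simp: walks_def)
  have "last (xs @ tl ys) = w" using a unfolding walks_def
    by (cases ys) (auto simp: last_append)
  then show ?thesis using a c unfolding walks_def by auto
qed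

lemma walks_rev: "xs \<in> walks u v \<Longrightarrow> rev xs \<in> walks v u \<and> walk_length cost (rev xs) = walk_length cost xs"
proof -
  assume a: "xs \<in> walks u v"
  have "is_walk edge (rev xs) \<and> walk_length cost (rev xs) = walk_length cost xs"
    using a by (intro walk_rev) (auto simp: walks_def edge_sym cost_sym)
  then show ?thesis using a walks_last[OF a] unfolding walks_def by (auto simp: hd_rev last_rev)
qed

lemma walks_edge: "edge u v \<Longrightarrow> [u, v] \<in> walks u v"
  unfolding walks_def edge_def by auto

lemma walks_single: "fst u \<in> X \<Longrightarrow> [u] \<in> walks u u"
  unfolding walks_def by auto

text \<open>The graph is connected: every vertex reaches a column over a fixed point of f,
  along which it can move freely between layers.\<close>

definition reach where "reach u v \<longleftrightarrow> walks u v \<noteq> {}"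

lemma reach_trans: "reach u v \<Longrightarrow> reach v w \<Longrightarrow> reach u w"
  unfolding reach_def using walks_append by blast
lemma reach_sym: "reach u v \<Longrightarrow> reach v u"
  unfolding reach_def using walks_rev by blast
lemma reach_edge: "edge u v \<Longrightarrow> reach u v"
  unfolding reach_def using walks_edge by blast

lemma reach_fixed_column: assumes z: "z \<in> Fix f" shows "reach (z, k) (z, k + int n)"
proof (induction n)
  case 0 then show ?case using walks_single[of "(z,k)"] FixX[OF z] by (auto simp: reach_def)
next
  case (Suc n)
  have "edge (z, k + int n) (z, k + int (Suc n))" using z FixX[OF z] Fixf[OF z] by (auto simp: edge_def)
  then show ?case using Suc reach_trans reach_edge by blast
qed

lemma reach_all: assumes "fst u \<in> X" "fst v \<in> X" shows "reach u v"
proof -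
  obtain z where z: "z \<in> Fix f" using Fix_ne by auto
  obtain a k b l where uv: "u = (a, k)" "v = (b, l)" by (cases u, cases v)
  have 1: "reach (a, k) (z, k)" using assms uv FixX[OF z] by (intro reach_edge) (auto simp: edge_def)
  have 2: "reach (z, l) (b, l)" using assms uv FixX[OF z] by (intro reach_edge) (auto simp: edge_def)
  have 3: "reach (z, k) (z, l)"
  proof (cases "k \<le> l")
    case True
    then show ?thesis using reach_fixed_column[OF z, of k "nat (l - k)"] by simp
  next
    case False
    then show ?thesis using reach_fixed_column[OF z, of l "nat (k - l)"] reach_sym by simp
  qed
  show ?thesis using 1 2 3 reach_trans uv by blast
qed

lemma walks_ne: "fst u \<in> X \<Longrightarrow> fst v \<in> X \<Longrightarrow> walks u v \<noteq> {}"
  using reach_all reach_def by blast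

lemma walk_lengths_bdd_below: "bdd_below (walk_length cost ` walks u v)"
  by (rule bdd_belowI[of _ 0]) (auto simp: walks_def intro: walk_length_nonneg)

lemma gdist_le: "xs \<in> walks u v \<Longrightarrow> gdist u v \<le> walk_length cost xs"
  unfolding gdist_def by (rule cInf_lower[OF imageI walk_lengths_bdd_below])

lemma gdist_ge: assumes "fst u \<in> X" "fst v \<in> X" "(\<And>xs. xs \<in> walks u v \<Longrightarrow> c \<le> walk_length cost xs)" shows "c \<le> gdist u v"
  unfolding gdist_def
proof (rule cInf_greatest)
  show "walk_length cost ` walks u v \<noteq> {}" using walks_ne[OF assms(1,2)] by blast
next
  fix x assume "x \<in> walk_length cost ` walks u v"
  then show "c \<le> x" using assms(3) by blast
qed

text \<open>All walk lengths are sums of distances of X; since these are discrete, the infimum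
  defining gdist is attained.\<close>

definition dist_set where "dist_set = {d a b | a b. a \<in> X \<and> b \<in> X}"

lemma finite_dist_set: "finite dist_set"
proof -
  have "dist_set = (\<lambda>(a,b). d a b) ` (X \<times> X)" unfolding dist_set_def by auto
  then show ?thesis using finX by simp
qed

lemma dist_set_discrete: "\<forall>g\<in>dist_set. g = 0 \<or> \<delta> \<le> g"
  unfolding dist_set_def using dist_ge_delta d0iff by fastforce

lemma cost_in_dist_set: "edge u v \<Longrightarrow> cost u v \<in> dist_set"
  unfolding edge_def cost_def dist_set_def using d0 by force

lemma walk_length_dist_set: "xs \<in> walks u v \<Longrightarrow> \<exists>ys. set ys \<subseteq> dist_set \<and> walk_length cost xs = sum_list ys"
  unfolding walks_def using walk_length_sum_list[of edge cost dist_set xs] cost_in_dist_set by auto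

lemma gdist_attained: assumes "fst u \<in> X" "fst v \<in> X" shows "\<exists>xs \<in> walks u v. gdist u v = walk_length cost xs"
proof -
  let ?S = "walk_length cost ` walks u v"
  obtain xs0 where x0: "xs0 \<in> walks u v" using walks_ne[OF assms] by blast
  let ?s0 = "walk_length cost xs0"
  let ?S' = "{s \<in> ?S. s \<le> ?s0}"
  have "?S' \<subseteq> {s. \<exists>ys. set ys \<subseteq> dist_set \<and> s = sum_list ys \<and> s \<le> ?s0}"
    using walk_length_dist_set by fastforce
  then have fin: "finite ?S'" using finite_bounded_sums[OF finite_dist_set dist_set_discrete dpos] finite_subset by blast
  have ne: "?S' \<noteq> {}" using x0 by auto
  let ?m = "Min ?S'"
  have mS: "?m \<in> ?S" using Min_in[OF fin ne] by auto
  have ml: "\<And>s. s \<in> ?S \<Longrightarrow> ?m \<le> s"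
  proof -
    fix s assume s: "s \<in> ?S"
    show "?m \<le> s"
    proof (cases "s \<le> ?s0")
      case True then show ?thesis using Min_le[OF fin] s by auto
    next
      case False
      have "?m \<le> ?s0" using Min_le[OF fin] x0 by auto
      then show ?thesis using False by auto
    qed
  qed
  have "gdist u v = ?m" unfolding gdist_def by (rule cInf_eq_minimum[OF mS ml])
  then show ?thesis using mS by auto
qed

lemma gdist_nonneg: "fst u \<in> X \<Longrightarrow> fst v \<in> X \<Longrightarrow> 0 \<le> gdist u v"
  by (rule gdist_ge) (auto simp: walks_def intro: walk_length_nonneg)

lemma gdist_refl: "fst u \<in> X \<Longrightarrow> gdist u u = 0"
  using gdist_le[OF walks_single, of u] gdist_nonneg[of u u] by simp

lemma gdist_triangle: assumes "fst u \<in> X" "fst v \<in> X" "fst w \<in> X" shows "gdist u w \<le> gdist u v + gdist v w"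
proof -
  obtain xs where xs: "xs \<in> walks u v" "gdist u v = walk_length cost xs" using gdist_attained[OF assms(1,2)] by blast
  obtain ys where ys: "ys \<in> walks v w" "gdist v w = walk_length cost ys" using gdist_attained[OF assms(2,3)] by blast
  have w: "xs @ tl ys \<in> walks u w" "walk_length cost (xs @ tl ys) = walk_length cost xs + walk_length cost ys"
    using walks_append[OF xs(1) ys(1)] by auto
  show ?thesis using gdist_le[OF w(1)] w(2) xs ys by simp
qed

lemma gdist_sym: assumes "fst u \<in> X" "fst v \<in> X" shows "gdist u v = gdist v u"
proof -
  have "gdist v u \<le> gdist u v" if h: "fst u \<in> X" "fst v \<in> X" for u v
  proof -
    obtain xs where xs: "xs \<in> walks u v" "gdist u v = walk_length cost xs" using gdist_attained[OF h] by blast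
    have w: "rev xs \<in> walks v u" "walk_length cost (rev xs) = walk_length cost xs" using walks_rev[OF xs(1)] by auto
    show ?thesis using gdist_le[OF w(1)] w(2) xs by simp
  qed
  then show ?thesis using assms by (meson order_antisym)
qed

lemma gdist_semigroup: assumes "fst u \<in> X" "fst v \<in> X" shows "gdist u v \<in> add_semigroup_gen dist_set"
proof -
  obtain xs where xs: "xs \<in> walks u v" "gdist u v = walk_length cost xs" using gdist_attained[OF assms] by blast
  obtain ys where ys: "set ys \<subseteq> dist_set" "walk_length cost xs = sum_list ys" using walk_length_dist_set[OF xs(1)] by blast
  show ?thesis
  proof (cases "ys = []")
    case True
    then have "gdist u v = d (fst u) (fst u)" using xs ys d0 assms by simp
    then show ?thesis using assms by (auto simp: dist_set_def intro!: add_semigroup_gen.base)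
  next
    case False then show ?thesis using add_semigroup_gen_sum_list ys xs by simp
  qed
qed

definition shift :: "int \<Rightarrow> 'b \<times> int \<Rightarrow> 'b \<times> int" where "shift m u = (fst u, snd u + m)"

lemma walks_shift: "xs \<in> walks u v \<Longrightarrow> map (shift m) xs \<in> walks (shift m u) (shift m v) \<and> walk_length cost (map (shift m) xs) = walk_length cost xs"
proof -
  assume a: "xs \<in> walks u v"
  have 1: "edge (shift m u) (shift m v)" if "edge u v" for u v using that by (auto simp: edge_def shift_def)
  have 2: "cost (shift m u) (shift m v) = cost u v" for u v by (auto simp: cost_def shift_def)
  have "is_walk edge (map (shift m) xs) \<and> walk_length cost (map (shift m) xs) = walk_length cost xs"
    using walk_map[of edge edge "shift m" cost cost xs] 1 2 a by (auto simp: walks_def)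
  then show ?thesis using a by (auto simp: walks_def hd_map last_map shift_def)
qed

lemma gdist_shift_le: assumes "fst u \<in> X" "fst v \<in> X" shows "gdist (shift m u) (shift m v) \<le> gdist u v"
proof -
  obtain xs where xs: "xs \<in> walks u v" "gdist u v = walk_length cost xs" using gdist_attained[OF assms] by blast
  have w: "map (shift m) xs \<in> walks (shift m u) (shift m v)" "walk_length cost (map (shift m) xs) = walk_length cost xs"
    using walks_shift[OF xs(1)] by auto
  show ?thesis using gdist_le[OF w(1)] w(2) xs(2) by simp
qed

lemma gdist_shift: assumes "fst u \<in> X" "fst v \<in> X" shows "gdist (shift m u) (shift m v) = gdist u v"
proof -
  have "gdist (shift (-m) (shift m u)) (shift (-m) (shift m v)) \<le> gdist (shift m u) (shift m v)"
    using assms by (intro gdist_shift_le) (auto simp: shift_def)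
  moreover have "shift (-m) (shift m w) = w" for w by (auto simp: shift_def)
  ultimately show ?thesis using gdist_shift_le[OF assms, of m] by auto
qed

lemma gdist_vertical_edge: "edge u v \<Longrightarrow> snd u \<noteq> snd v \<Longrightarrow> gdist u v = 0"
proof -
  assume a: "edge u v" "snd u \<noteq> snd v"
  have "gdist u v \<le> 0" using gdist_le[OF walks_edge[OF a(1)]] a(2) by (simp add: cost_def)
  moreover have "0 \<le> gdist u v" using a(1) by (intro gdist_nonneg) (auto simp: edge_def)
  ultimately show ?thesis by simp
qed

lemma gdist_zero_replace: assumes "fst u \<in> X" "fst u' \<in> X" "fst v \<in> X" "gdist u u' = 0" shows "gdist u v = gdist u' v"
proof -
  have "gdist u v \<le> gdist u u' + gdist u' v" using gdist_triangle assms by blast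
  moreover have "gdist u' v \<le> gdist u' u + gdist u v" using gdist_triangle assms by blast
  moreover have "gdist u' u = 0" using gdist_sym assms by simp
  ultimately show ?thesis using assms by simp
qed

end

context unroll_base begin

text \<open>pot_fwd y n a is the least cost of reaching y from a while descending n layers, using
  only horizontal moves in the top layer and at each intermediate step; pot_bwd is the
  analogue for ascending.  Together they form a 1-Lipschitz potential on the graph.\<close>

primrec pot_fwd :: "'b \<Rightarrow> nat \<Rightarrow> 'b \<Rightarrow> real" where
  "pot_fwd y 0 a = d a y"
| "pot_fwd y (Suc n) a = Min ((\<lambda>c. pot_fwd y n (the (f c)) + d a c) ` dom f)"

primrec pot_bwd :: "'b \<Rightarrow> nat \<Rightarrow> 'b \<Rightarrow> real" where
  "pot_bwd y 0 a = d a y"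
| "pot_bwd y (Suc n) a = Min ((\<lambda>c. pot_bwd y n c + d a (the (f c))) ` dom f)"

lemma dom_f_ne: "dom f \<noteq> {}" using Fix_ne by (auto simp: Fix_def)

lemma f_the_X: "c \<in> dom f \<Longrightarrow> the (f c) \<in> X" using fX by auto

lemma Min_dom_f_attained: "\<exists>c\<in>dom f. Min (g ` dom f) = g c"
proof -
  have "Min (g ` dom f) \<in> g ` dom f" using Min_in[of "g ` dom f"] findom dom_f_ne by blast
  then show ?thesis by auto
qed

lemma Min_dom_f_le: "c \<in> dom f \<Longrightarrow> Min (g ` dom f) \<le> g c"
  using findom by (auto intro: Min_le)

lemma Min_dom_f_ge: "(\<And>c. c \<in> dom f \<Longrightarrow> t \<le> g c) \<Longrightarrow> t \<le> Min (g ` dom f)"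
  using findom dom_f_ne by (auto intro: Min.boundedI)

lemma pot_fwd_lip: assumes "y \<in> X" "a \<in> X" "b \<in> X" shows "pot_fwd y n a \<le> pot_fwd y n b + d a b"
proof (cases n)
  case 0 then show ?thesis using dtri[OF assms(2,3,1)] by simp
next
  case (Suc m)
  obtain c where c: "c \<in> dom f" "pot_fwd y (Suc m) b = pot_fwd y m (the (f c)) + d b c"
    using Min_dom_f_attained[of "\<lambda>c. pot_fwd y m (the (f c)) + d b c"] by auto
  have "pot_fwd y (Suc m) a \<le> pot_fwd y m (the (f c)) + d a c" using Min_dom_f_le[OF c(1)] by simp
  also have "\<dots> \<le> pot_fwd y m (the (f c)) + d a b + d b c" using dtri[OF assms(2,3)] c domf by auto
  finally show ?thesis using c Suc by simp
qed

lemma pot_bwd_lip: assumes "y \<in> X" "a \<in> X" "b \<in> X" shows "pot_bwd y n a \<le> pot_bwd y n b + d a b"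
proof (cases n)
  case 0 then show ?thesis using dtri[OF assms(2,3,1)] by simp
next
  case (Suc m)
  obtain c where c: "c \<in> dom f" "pot_bwd y (Suc m) b = pot_bwd y m c + d b (the (f c))"
    using Min_dom_f_attained[of "\<lambda>c. pot_bwd y m c + d b (the (f c))"] by auto
  have "pot_bwd y (Suc m) a \<le> pot_bwd y m c + d a (the (f c))" using Min_dom_f_le[OF c(1)] by simp
  also have "\<dots> \<le> pot_bwd y m c + d a b + d b (the (f c))" using dtri[OF assms(2,3) f_the_X[OF c(1)]] by auto
  finally show ?thesis using c Suc by simp
qed

lemma pot_bwd_nonneg: "y \<in> X \<Longrightarrow> a \<in> X \<Longrightarrow> 0 \<le> pot_bwd y n a"
proof (induction n arbitrary: a)
  case 0 then show ?case using dnn by simp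
next
  case (Suc n)
  show ?case using Suc f_the_X dnn domf by (auto intro!: Min_dom_f_ge add_nonneg_nonneg)
qed

lemma pot_fwd_step: assumes "y \<in> X" "a \<in> dom f" shows "pot_fwd y (Suc n) a = pot_fwd y n (the (f a))"
proof (rule antisym)
  have "pot_fwd y (Suc n) a \<le> pot_fwd y n (the (f a)) + d a a" using Min_dom_f_le[OF assms(2)] by simp
  then show "pot_fwd y (Suc n) a \<le> pot_fwd y n (the (f a))" using d0 domf assms by auto
next
  show "pot_fwd y n (the (f a)) \<le> pot_fwd y (Suc n) a"
    unfolding pot_fwd.simps
  proof (rule Min_dom_f_ge)
    fix c assume c: "c \<in> dom f"
    have "pot_fwd y n (the (f a)) \<le> pot_fwd y n (the (f c)) + d (the (f a)) (the (f c))"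
      using pot_fwd_lip assms f_the_X c by blast
    then show "pot_fwd y n (the (f a)) \<le> pot_fwd y n (the (f c)) + d a c" using isof[OF assms(2) c] by simp
  qed
qed

lemma pot_bwd_step: assumes "y \<in> X" "a \<in> dom f" shows "pot_bwd y (Suc n) (the (f a)) = pot_bwd y n a"
proof (rule antisym)
  have "pot_bwd y (Suc n) (the (f a)) \<le> pot_bwd y n a + d (the (f a)) (the (f a))" using Min_dom_f_le[OF assms(2)] by simp
  then show "pot_bwd y (Suc n) (the (f a)) \<le> pot_bwd y n a" using d0 f_the_X assms by auto
next
  show "pot_bwd y n a \<le> pot_bwd y (Suc n) (the (f a))"
    unfolding pot_bwd.simps
  proof (rule Min_dom_f_ge)
    fix c assume c: "c \<in> dom f"
    have "pot_bwd y n a \<le> pot_bwd y n c + d a c"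
      using pot_bwd_lip assms c domf by blast
    then show "pot_bwd y n a \<le> pot_bwd y n c + d (the (f a)) (the (f c))" using isof[OF assms(2) c] by simp
  qed
qed

definition pot :: "'b \<Rightarrow> int \<Rightarrow> 'b \<Rightarrow> real" where
  "pot y k a = (if 0 \<le> k then pot_fwd y (nat k) a else pot_bwd y (nat (-k)) a)"

lemma pot_step: assumes "y \<in> X" "b \<in> dom f" shows "pot y (j + 1) b = pot y j (the (f b))"
proof (cases "0 \<le> j")
  case True
  then have "nat (j + 1) = Suc (nat j)" by simp
  then show ?thesis using True pot_fwd_step[OF assms] by (simp add: pot_def)
next
  case False
  then have e: "nat (- j) = Suc (nat (- (j + 1)))" by simp
  have "pot y j (the (f b)) = pot_bwd y (nat (- (j+1))) b" using False pot_bwd_step[OF assms] e by (simp add: pot_def)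
  moreover have "pot y (j + 1) b = pot_bwd y (nat (- (j+1))) b"
    using False by (cases "j + 1 = 0") (auto simp: pot_def)
  ultimately show ?thesis by simp
qed

lemma pot_lip: "y \<in> X \<Longrightarrow> a \<in> X \<Longrightarrow> b \<in> X \<Longrightarrow> pot y k a \<le> pot y k b + d a b"
  unfolding pot_def using pot_fwd_lip pot_bwd_lip by auto

lemma pot_edge: assumes "y \<in> X" "edge u v"
  shows "pot y (snd u - l) (fst u) \<le> pot y (snd v - l) (fst v) + cost u v"
proof -
  obtain a k b m where uv: "u = (a,k)" "v = (b,m)" by (cases u, cases v)
  have ab: "a \<in> X" "b \<in> X" using assms uv by (auto simp: edge_def)
  consider "m = k" | "m = k - 1" "f a = Some b" | "m = k + 1" "f b = Some a"
    using assms(2) uv by (auto simp: edge_def)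
  then show ?thesis
  proof cases
    case 1 then show ?thesis using uv pot_lip[OF assms(1) ab] by (simp add: cost_def)
  next
    case 2
    have "pot y (k - 1 - l + 1) a = pot y (k - 1 - l) b" using pot_step[OF assms(1), of a "k - 1 - l"] 2 by auto
    then show ?thesis using 2 uv by (simp add: cost_def)
  next
    case 3
    have "pot y (k - l + 1) b = pot y (k - l) a" using pot_step[OF assms(1), of b "k - l"] 3 by auto
    then show ?thesis using 3 uv by (simp add: cost_def algebra_simps)
  qed
qed

lemma gdist_lower: assumes "x \<in> X" "y \<in> X" shows "pot y (k - l) x \<le> gdist (x, k) (y, l)"
proof (rule gdist_ge)
  show "fst (x, k) \<in> X" "fst (y, l) \<in> X" using assms by auto
next
  fix xs assume xs: "xs \<in> walks (x, k) (y, l)"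
  have "pot y (snd (hd xs) - l) (fst (hd xs)) \<le> pot y (snd (last xs) - l) (fst (last xs)) + walk_length cost xs"
    using walk_potential[of edge "\<lambda>w. pot y (snd w - l) (fst w)" cost xs] pot_edge[OF assms(2)] xs
    by (auto simp: walks_def)
  moreover have "pot y 0 y = 0" using d0 assms by (simp add: pot_def)
  ultimately show "pot y (k - l) x \<le> walk_length cost xs" using xs by (simp add: walks_def)
qed

lemma gdist_layer: assumes "x \<in> X" "y \<in> X" shows "gdist (x, k) (y, k) = d x y"
proof (rule antisym)
  have "edge (x,k) (y,k)" using assms by (simp add: edge_def)
  then show "gdist (x, k) (y, k) \<le> d x y" using gdist_le[OF walks_edge] by (fastforce simp: cost_def)
next
  show "d x y \<le> gdist (x, k) (y, k)" using gdist_lower[OF assms, of k k] by (simp add: pot_def)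
qed

end

context unroll_base begin

text \<open>Descending many layers from x and coming back to y in layer 0 costs either the
  distance from x to y through a fixed point of f (via_fix), or something growing linearly
  in the number of layers.  The length of the forward orbit of a point bounds how long
  f can be followed without paying \<open>\<delta>\<close> for a horizontal move.\<close>

definition orbit :: "'b \<Rightarrow> 'b set" where "orbit a = {b. \<exists>j>0. pit f j a = Some b}"
definition orbit_card :: "'b \<Rightarrow> nat" where "orbit_card a = card (orbit a)"
definition via_fix :: "'b \<Rightarrow> 'b \<Rightarrow> real" where "via_fix x y = Min ((\<lambda>z. d x z + d z y) ` Fix f)"

lemma finite_Fix: "finite (Fix f)"
proof -
  have "Fix f \<subseteq> X" using FixX by auto
  then show ?thesis using finX finite_subset by blast
qed

lemma orbit_subset: "orbit a \<subseteq> X"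
proof
  fix b assume "b \<in> orbit a"
  then obtain j where j: "j > 0" "pit f j a = Some b" by (auto simp: orbit_def)
  then obtain j' where "j = Suc j'" by (cases j) auto
  then have "b \<in> ran f" using pit_in_ran[of f j' a b] j by simp
  then show "b \<in> X" using ranf by auto
qed

lemma orbit_card_le: "orbit_card a \<le> card X"
  unfolding orbit_card_def using orbit_subset finX card_mono by blast

lemma orbit_step: assumes "a \<in> dom f" shows "orbit a = insert (the (f a)) (orbit (the (f a)))"
proof -
  obtain b where b: "f a = Some b" using assms by auto
  have "pit f (Suc j) a = pit f j b" for j using pit_Suc_first[of f j a] b by simp
  have "(\<exists>j>0. pit f j a = Some c) \<longleftrightarrow> c = b \<or> (\<exists>j>0. pit f j b = Some c)" for c
  proof
    assume "\<exists>j>0. pit f j a = Some c"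
    then obtain j where j: "j > 0" "pit f j a = Some c" by blast
    then obtain j' where j': "j = Suc j'" by (cases j) auto
    then have "pit f j' b = Some c" using j \<open>\<And>j. pit f (Suc j) a = pit f j b\<close> by simp
    then show "c = b \<or> (\<exists>j>0. pit f j b = Some c)" by (cases j') auto
  next
    assume "c = b \<or> (\<exists>j>0. pit f j b = Some c)"
    then show "\<exists>j>0. pit f j a = Some c"
    proof
      assume "c = b" then show ?thesis using \<open>\<And>j. pit f (Suc j) a = pit f j b\<close>[of 0] by (intro exI[of _ 1]) simp
    next
      assume "\<exists>j>0. pit f j b = Some c"
      then obtain j where "j > 0" "pit f j b = Some c" by blast
      then show ?thesis using \<open>\<And>j. pit f (Suc j) a = pit f j b\<close>[of j] by (intro exI[of _ "Suc j"]) simp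
    qed
  qed
  then show ?thesis using b by (auto simp: orbit_def)
qed

lemma notin_orbit: assumes "a \<in> dom f" "a \<notin> Fix f" shows "the (f a) \<notin> orbit (the (f a))"
proof
  obtain b where b: "f a = Some b" using assms by auto
  assume "the (f a) \<in> orbit (the (f a))"
  then obtain j where j: "j > 0" "pit f j b = Some b" using b by (auto simp: orbit_def)
  moreover have "b \<in> dom f" using pit_pos_dom[OF j(1), of f b] j(2) by simp
  ultimately have "b \<in> Per f" by (auto simp: Per_def)
  then have "f b = Some b" using Per_Fix by (auto simp: Fix_def)
  then have "a = b" using f_inj b by blast
  then show False using assms b by (auto simp: Fix_def)
qed

lemma orbit_card_step: assumes "a \<in> dom f" "a \<notin> Fix f" shows "orbit_card a = Suc (orbit_card (the (f a)))"
proof -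
  have "finite (orbit (the (f a)))" using orbit_subset finX finite_subset by blast
  then show ?thesis using orbit_step[OF assms(1)] notin_orbit[OF assms] by (simp add: orbit_card_def)
qed

lemma via_fix_step: assumes "c \<in> dom f" shows "via_fix (the (f c)) y = via_fix c y"
proof -
  have "d (the (f c)) z = d c z" if "z \<in> Fix f" for z
    using f_isometric[of c "the (f c)" z z] assms that Fixf by auto
  then have "(\<lambda>z. d (the (f c)) z + d z y) ` Fix f = (\<lambda>z. d c z + d z y) ` Fix f"
    by (intro image_cong) auto
  then show ?thesis unfolding via_fix_def by simp
qed

lemma via_fix_attained: "\<exists>z\<in>Fix f. via_fix x y = d x z + d z y"
proof -
  have "via_fix x y \<in> (\<lambda>z. d x z + d z y) ` Fix f" unfolding via_fix_def using Min_in finite_Fix Fix_ne by blast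
  then show ?thesis by auto
qed

lemma via_fix_le: "z \<in> Fix f \<Longrightarrow> via_fix x y \<le> d x z + d z y"
  unfolding via_fix_def using finite_Fix by (auto intro: Min_le)

lemma via_fix_triangle: assumes "a \<in> X" "c \<in> X" "y \<in> X" shows "via_fix a y \<le> d a c + via_fix c y"
proof -
  obtain z where z: "z \<in> Fix f" "via_fix c y = d c z + d z y" using via_fix_attained by blast
  have "via_fix a y \<le> d a z + d z y" using via_fix_le[OF z(1)] .
  also have "\<dots> \<le> d a c + d c z + d z y" using dtri[OF assms(1,2) FixX[OF z(1)]] by simp
  finally show ?thesis using z by simp
qed

lemma via_fix_at_fix: "a \<in> Fix f \<Longrightarrow> a \<in> X \<Longrightarrow> via_fix a y \<le> d a y"
  using via_fix_le[of a a y] d0 by simp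

lemma pot_fwd_fix: assumes "y \<in> X" "a \<in> Fix f" shows "pot_fwd y n a = d a y"
proof (induction n)
  case 0 then show ?case by simp
next
  case (Suc n)
  have "a \<in> dom f" using assms(2) by (auto simp: Fix_def)
  then show ?case using pot_fwd_step[OF assms(1)] Fixf[OF assms(2)] Suc by simp
qed

definition far_bound :: "nat \<Rightarrow> 'b \<Rightarrow> real" where
  "far_bound n a = \<delta> * ((real n - real (orbit_card a)) / real (card X + 1) - 1)"

lemma far_bound_0: "far_bound 0 a \<le> 0"
proof -
  have "(real 0 - real (orbit_card a)) / real (card X + 1) = - (real (orbit_card a) / real (card X + 1))"
    by simp
  moreover have "0 \<le> real (orbit_card a) / real (card X + 1)" by simp
  ultimately have "(real 0 - real (orbit_card a)) / real (card X + 1) - 1 \<le> 0" by linarith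
  then show ?thesis unfolding far_bound_def using dpos by (intro mult_nonneg_nonpos) auto
qed

text \<open>Following f from a does not change the bound ...\<close>
lemma far_bound_step:
  assumes "a \<in> dom f" "a \<notin> Fix f" shows "far_bound (Suc n) a = far_bound n (the (f a))"
  using orbit_card_step[OF assms] by (simp add: far_bound_def)

text \<open>... while any other horizontal move, which costs at least \<open>\<delta>\<close>, raises it by at most \<open>\<delta>\<close>.\<close>
lemma far_bound_Suc_le: assumes "b \<in> X" shows "far_bound (Suc n) a \<le> far_bound n b + \<delta>"
proof -
  let ?M = "real (card X + 1)" and ?x = "real (Suc n) - real (orbit_card a)"
    and ?y = "real n - real (orbit_card b)"
  have "?x - ?y = 1 + real (orbit_card b) - real (orbit_card a)" by simp
  then have "?x / ?M - ?y / ?M = (1 + real (orbit_card b) - real (orbit_card a)) / ?M"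
    by (simp only: diff_divide_distrib[symmetric])
  also have "\<dots> \<le> 1" using orbit_card_le[of b] by simp
  finally have "?x / ?M - 1 \<le> (?y / ?M - 1) + 1" by simp
  then have "\<delta> * (?x / ?M - 1) \<le> \<delta> * ((?y / ?M - 1) + 1)" using dpos by (intro mult_left_mono) auto
  then show ?thesis unfolding far_bound_def by (simp add: algebra_simps)
qed

lemma pot_fwd_far: assumes y: "y \<in> X"
  shows "a \<in> X \<Longrightarrow> min (via_fix a y) (far_bound n a) \<le> pot_fwd y n a"
proof (induction n arbitrary: a)
  case 0
  then show ?case using far_bound_0[of a] dnn[OF 0 y] by (simp add: min_le_iff_disj)
next
  case (Suc n)
  show ?case
  proof (cases "a \<in> Fix f")
    case True
    then show ?thesis using pot_fwd_fix[OF y True] via_fix_at_fix[OF True Suc.prems, of y]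
      by (simp del: pot_fwd.simps add: min_le_iff_disj)
  next
    case nf: False
    show ?thesis
      unfolding pot_fwd.simps
    proof (rule Min_dom_f_ge)
      fix c assume c: "c \<in> dom f"
      have cX: "c \<in> X" "the (f c) \<in> X" using c domf f_the_X by auto
      have IH: "min (via_fix c y) (far_bound n (the (f c))) \<le> pot_fwd y n (the (f c))"
        using Suc.IH[OF cX(2)] via_fix_step[OF c] by simp
      show "min (via_fix a y) (far_bound (Suc n) a) \<le> pot_fwd y n (the (f c)) + d a c"
      proof (cases "c = a")
        case True
        then show ?thesis using IH far_bound_step[OF c[unfolded True] nf] d0[OF Suc.prems] by simp
      next
        case False
        have "\<delta> \<le> d a c" using dist_ge_delta[OF Suc.prems cX(1)] False by simp
        moreover have "via_fix a y \<le> d a c + via_fix c y" using via_fix_triangle[OF Suc.prems cX(1) y] .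
        moreover have "far_bound (Suc n) a \<le> far_bound n (the (f c)) + \<delta>" by (rule far_bound_Suc_le[OF cX(2)])
        ultimately show ?thesis using IH by (auto simp: min_le_iff_disj)
      qed
    qed
  qed
qed

lemma gdist_far: assumes "x \<in> X" "y \<in> X"
  shows "min (via_fix x y) (\<delta> * (real N / real (card X + 1) - 2)) \<le> gdist (x, int N) (y, 0)"
proof -
  have "real (orbit_card x) / real (card X + 1) \<le> 1" using orbit_card_le[of x] by simp
  then have "\<delta> * (real N / real (card X + 1) - 2) \<le> far_bound N x"
    unfolding far_bound_def using dpos by (intro mult_left_mono) (auto simp: diff_divide_distrib)
  then have "min (via_fix x y) (\<delta> * (real N / real (card X + 1) - 2)) \<le> pot_fwd y N x"
    using pot_fwd_far[OF assms(2) assms(1), of N] by linarith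
  moreover have "pot y (int N - 0) x = pot_fwd y N x" by (simp add: pot_def)
  ultimately show ?thesis using gdist_lower[OF assms, of "int N" 0] by linarith
qed

lemma pot_bwd_zero: assumes "y \<in> X" shows "a \<in> X \<Longrightarrow> pot_bwd y n a = 0 \<Longrightarrow> pit f n y = Some a"
proof (induction n arbitrary: a)
  case 0 then show ?case using d0iff assms by simp
next
  case (Suc n)
  obtain c where c: "c \<in> dom f" "pot_bwd y (Suc n) a = pot_bwd y n c + d a (the (f c))"
    using Min_dom_f_attained[of "\<lambda>c. pot_bwd y n c + d a (the (f c))"] by auto
  have cX: "c \<in> X" "the (f c) \<in> X" using c domf f_the_X by auto
  have n1: "0 \<le> pot_bwd y n c" using pot_bwd_nonneg[OF assms cX(1)] .
  have n2: "0 \<le> d a (the (f c))" using dnn[OF Suc.prems(1) cX(2)] .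
  have "pot_bwd y n c = 0" "d a (the (f c)) = 0" using c Suc.prems n1 n2 by linarith+
  then have "pit f n y = Some c" "a = the (f c)" using Suc.IH[OF cX(1)] d0iff[OF Suc.prems(1) cX(2)] by auto
  then show ?case using c by auto
qed

lemma pot_bwd_pos: assumes "e \<in> X" "e \<notin> dom f" "j > 0" "a \<in> X" shows "0 < pot_bwd e j a"
proof -
  have "pit f j e = None" using pit_pos_dom[OF assms(3), of f e] assms(2) by auto
  then have "pot_bwd e j a \<noteq> 0" using pot_bwd_zero[OF assms(1,4)] by auto
  then show ?thesis using pot_bwd_nonneg[OF assms(1,4), of j] by simp
qed

lemma gdist_fixed_column0: assumes "z \<in> Fix f" shows "gdist (z, k) (z, k + int n) = 0"
proof (induction n)
  case 0 then show ?case using gdist_refl FixX[OF assms] by simp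
next
  case (Suc n)
  have zX: "z \<in> X" using FixX[OF assms] .
  have "edge (z, k + int n) (z, k + int (Suc n))" using zX Fixf[OF assms] by (auto simp: edge_def)
  then have "gdist (z, k + int n) (z, k + int (Suc n)) = 0" by (intro gdist_vertical_edge) auto
  then have "gdist (z, k) (z, k + int (Suc n)) \<le> 0" using gdist_triangle[of "(z,k)" "(z, k + int n)" "(z, k + int (Suc n))"] Suc zX by simp
  then show ?case using gdist_nonneg[of "(z,k)" "(z, k + int (Suc n))"] zX by simp
qed

lemma gdist_fixed_column: assumes "z \<in> Fix f" shows "gdist (z, k) (z, l) = 0"
proof (cases "k \<le> l")
  case True then show ?thesis using gdist_fixed_column0[OF assms, of k "nat (l - k)"] by simp
next
  case False
  then have "gdist (z, l) (z, k) = 0" using gdist_fixed_column0[OF assms, of l "nat (k - l)"] by simp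
  then show ?thesis using gdist_sym FixX[OF assms] by simp
qed

lemma gdist_pos_above: assumes "a \<in> X" "e \<in> X" "e \<notin> dom f" "k < l" shows "0 < gdist (a, k) (e, l)"
proof -
  have "pot e (k - l) a = pot_bwd e (nat (l - k)) a" using assms(4) by (simp add: pot_def)
  moreover have "0 < pot_bwd e (nat (l - k)) a" using pot_bwd_pos[OF assms(2,3) _ assms(1)] assms(4) by simp
  ultimately show ?thesis using gdist_lower[OF assms(1,2), of k l] by simp
qed

end

text \<open>Every endpoint e \<in> X - dom f gets a tail of N fresh points \<nu>(e,1), ..., \<nu>(e,N), and f is
  extended by e \<mapsto> \<nu>(e,1) \<mapsto> ... \<mapsto> \<nu>(e,N).  The point \<nu>(e,t) is placed at the vertex (e,t) of
  the unrolled graph, i.e. t layers above e, and inherits the path metric.\<close>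

locale unroll_ext = unroll_base +
  fixes N :: nat and \<nu> :: "'a \<times> nat \<Rightarrow> 'a"
  assumes N1: "N \<ge> 1"
    and nu_inj: "inj_on \<nu> ((X - dom f) \<times> {1..N})"
    and nu_X: "\<nu> ` ((X - dom f) \<times> {1..N}) \<inter> X = {}"
begin

definition E where "E = X - dom f"
definition P where "P = E \<times> {1..N}"
definition Y where "Y = X \<union> \<nu> ` P"
definition nu_inv where "nu_inv u = the_inv_into P \<nu> u"

definition f' :: "'a \<rightharpoonup> 'a" where
  "f' u = (if u \<in> X then (case f u of Some w \<Rightarrow> Some w | None \<Rightarrow> Some (\<nu> (u, 1)))
     else if u \<in> \<nu> ` P \<and> snd (nu_inv u) < N then Some (\<nu> (fst (nu_inv u), Suc (snd (nu_inv u)))) else None)"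

definition node :: "'a \<Rightarrow> 'a \<times> int" where
  "node u = (if u \<in> X then (u, 0) else (fst (nu_inv u), int (snd (nu_inv u))))"

definition d' :: "'a \<Rightarrow> 'a \<Rightarrow> real" where "d' u v = gdist (node u) (node v)"

lemma nuinj: "inj_on \<nu> P" using nu_inj by (simp add: P_def E_def)
lemma nu_inv_nu: "p \<in> P \<Longrightarrow> nu_inv (\<nu> p) = p"
  unfolding nu_inv_def using nuinj by (simp add: the_inv_into_f_f)
lemma nu_notX: "p \<in> P \<Longrightarrow> \<nu> p \<notin> X" using nu_X by (auto simp: P_def E_def)
lemma EX: "e \<in> E \<Longrightarrow> e \<in> X" by (simp add: E_def)
lemma Edom: "e \<in> E \<Longrightarrow> e \<notin> dom f" by (simp add: E_def)
lemma finE: "finite E" using finX by (simp add: E_def)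
lemma finP: "finite P" using finE by (simp add: P_def)
lemma finY: "finite Y" using finX finP by (simp add: Y_def)
lemma XY: "X \<subseteq> Y" by (auto simp: Y_def)

lemma node_X: "x \<in> X \<Longrightarrow> node x = (x, 0)" by (simp add: node_def)
lemma node_nu: "(e, t) \<in> P \<Longrightarrow> node (\<nu> (e, t)) = (e, int t)"
  using nu_notX nu_inv_nu by (simp add: node_def)
lemma node_fst: "u \<in> Y \<Longrightarrow> fst (node u) \<in> X"
  unfolding Y_def using node_X node_nu EX by (auto simp: P_def)

lemma f'_dom: "x \<in> dom f \<Longrightarrow> f' x = f x"
  using domf by (auto simp: f'_def)
lemma f'_E: "e \<in> E \<Longrightarrow> f' e = Some (\<nu> (e, 1))"
  unfolding E_def f'_def by (auto simp: domIff)
lemma f'_nu: "(e, t) \<in> P \<Longrightarrow> f' (\<nu> (e, t)) = (if t < N then Some (\<nu> (e, Suc t)) else None)"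
  using nu_notX nu_inv_nu by (auto simp: f'_def)
lemma f'_out: "u \<notin> Y \<Longrightarrow> f' u = None"
  by (auto simp: f'_def Y_def)

lemma Y_cases: "u \<in> Y \<Longrightarrow> (u \<in> X \<Longrightarrow> Q) \<Longrightarrow> (\<And>e t. (e, t) \<in> P \<Longrightarrow> u = \<nu> (e, t) \<Longrightarrow> Q) \<Longrightarrow> Q"
  unfolding Y_def by auto

lemma X_cases: "u \<in> X \<Longrightarrow> (u \<in> dom f \<Longrightarrow> Q) \<Longrightarrow> (u \<in> E \<Longrightarrow> Q) \<Longrightarrow> Q"
  unfolding E_def by auto

lemma map_le_f': "f \<subseteq>\<^sub>m f'"
  unfolding map_le_def using f'_dom by auto

lemma f'_Y: "f' u = Some v \<Longrightarrow> u \<in> Y \<and> v \<in> Y"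
proof -
  assume a: "f' u = Some v"
  then have uY: "u \<in> Y" using f'_out by fastforce
  show ?thesis
  proof (rule Y_cases[OF uY])
    assume uX: "u \<in> X"
    show ?thesis
    proof (rule X_cases[OF uX])
      assume "u \<in> dom f" then show ?thesis using a f'_dom fX uY XY by auto
    next
      assume "u \<in> E" then show ?thesis using a f'_E N1 uY by (auto simp: Y_def P_def)
    qed
  next
    fix e t assume "(e, t) \<in> P" "u = \<nu> (e, t)"
    then show ?thesis using a f'_nu uY by (auto simp: Y_def P_def split: if_splits)
  qed
qed

text \<open>The key invariant: one step of f' moves the graph vertex of a point one layer up,
  up to gdist 0.  This makes f' an isometry.\<close>

lemma node_step: assumes "f' u = Some v" shows "gdist (node v) (shift 1 (node u)) = 0"
proof -
  have uY: "u \<in> Y" using f'_Y assms by blast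
  show ?thesis
  proof (rule Y_cases[OF uY])
    assume uX: "u \<in> X"
    show ?thesis
    proof (rule X_cases[OF uX])
      assume ud: "u \<in> dom f"
      then have fv: "f u = Some v" using assms f'_dom by simp
      then have vX: "v \<in> X" using fX by blast
      have "edge (u, 1) (v, 0)" using uX vX fv by (simp add: edge_def)
      then have "gdist (u, 1) (v, 0) = 0" by (intro gdist_vertical_edge) auto
      then show ?thesis using gdist_sym[of "(u,1)" "(v,0)"] uX vX by (simp add: node_X shift_def)
    next
      assume ue: "u \<in> E"
      then have "v = \<nu> (u, 1)" using assms f'_E by simp
      moreover have "(u, 1) \<in> P" using ue N1 by (simp add: P_def)
      ultimately show ?thesis using node_nu uX gdist_refl ue EX by (simp add: node_X shift_def)
    qed
  next
    fix e t assume p: "(e, t) \<in> P" "u = \<nu> (e, t)"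
    then have tN: "t < N" "v = \<nu> (e, Suc t)" using assms f'_nu by (auto split: if_splits)
    then have "(e, Suc t) \<in> P" using p by (simp add: P_def)
    moreover have "gdist (e, 1 + int t) (e, int t + 1) = 0" using gdist_refl[of "(e, int t + 1)"] EX p
      by (simp add: add.commute P_def)
    ultimately show ?thesis using node_nu p tN by (simp add: shift_def P_def)
  qed
qed

lemma d'_iso: assumes "f' u = Some u'" "f' v = Some v'" shows "d' u' v' = d' u v"
proof -
  have Y: "u \<in> Y" "u' \<in> Y" "v \<in> Y" "v' \<in> Y" using f'_Y assms by blast+
  have F: "fst (node u) \<in> X" "fst (node u') \<in> X" "fst (node v) \<in> X" "fst (node v') \<in> X"
    using node_fst Y by blast+
  have Fs: "fst (shift 1 (node u)) \<in> X" "fst (shift 1 (node v)) \<in> X" using F by (auto simp: shift_def)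
  have "gdist (node u') (node v') = gdist (shift 1 (node u)) (node v')"
    using gdist_zero_replace[OF F(2) Fs(1) F(4) node_step[OF assms(1)]] .
  also have "\<dots> = gdist (node v') (shift 1 (node u))" using gdist_sym F Fs by blast
  also have "\<dots> = gdist (shift 1 (node v)) (shift 1 (node u))"
    using gdist_zero_replace[OF F(4) Fs(2) Fs(1) node_step[OF assms(2)]] .
  also have "\<dots> = gdist (node v) (node u)" using gdist_shift F by blast
  also have "\<dots> = gdist (node u) (node v)" using gdist_sym F by blast
  finally show ?thesis by (simp add: d'_def)
qed

lemma d'_X: "a \<in> X \<Longrightarrow> b \<in> X \<Longrightarrow> d' a b = d a b"
  using gdist_layer by (simp add: d'_def node_X)

lemma d'_pos: assumes "u \<in> Y" "v \<in> Y" "u \<noteq> v" shows "0 < d' u v"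
proof -
  have XE: "0 < gdist (a, 0) (e, int t)" if "a \<in> X" "(e, t) \<in> P" for a e t
    using gdist_pos_above[of a e 0 "int t"] that EX Edom by (auto simp: P_def)
  have FF: "fst (node u) \<in> X" "fst (node v) \<in> X" using node_fst assms by auto
  show ?thesis
  proof (rule Y_cases[OF assms(1)])
    assume uX: "u \<in> X"
    show ?thesis
    proof (rule Y_cases[OF assms(2)])
      assume vX: "v \<in> X"
      then show ?thesis using d'_X uX dist_ge_delta assms(3) dpos by (metis less_le_trans)
    next
      fix e t assume "(e, t) \<in> P" "v = \<nu> (e, t)"
      then show ?thesis using XE uX by (simp add: d'_def node_X node_nu)
    qed
  next
    fix e t assume et: "(e, t) \<in> P" "u = \<nu> (e, t)"
    show ?thesis
    proof (rule Y_cases[OF assms(2)])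
      assume vX: "v \<in> X"
      then show ?thesis using XE[OF vX et(1)] gdist_sym FF et by (simp add: d'_def node_X node_nu)
    next
      fix e' t' assume et': "(e', t') \<in> P" "v = \<nu> (e', t')"
      have eX: "e \<in> X" "e' \<in> X" "e \<notin> dom f" "e' \<notin> dom f" using et et' EX Edom by (auto simp: P_def)
      have dv: "d' u v = gdist (e, int t) (e', int t')" using et et' by (simp add: d'_def node_nu)
      consider "t = t'" | "t < t'" | "t' < t" by linarith
      then show ?thesis
      proof cases
        case 1
        then have "e \<noteq> e'" using assms(3) et et' by auto
        then show ?thesis using dv 1 gdist_layer eX dist_ge_delta dpos by (metis less_le_trans)
      next
        case 2 then show ?thesis using dv gdist_pos_above[OF eX(1,2,4)] by simp
      next
        case 3
        then have "0 < gdist (e', int t') (e, int t)" using gdist_pos_above[OF eX(2,1,3)] by simp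
        then show ?thesis using dv gdist_sym eX by simp
      qed
    qed
  qed
qed

lemma metric_Y: "metric_on Y d'"
  unfolding metric_on_def
proof (intro conjI ballI)
  fix x y assume xy: "x \<in> Y" "y \<in> Y"
  have F: "fst (node x) \<in> X" "fst (node y) \<in> X" using node_fst xy by auto
  show "0 \<le> d' x y" using gdist_nonneg F by (simp add: d'_def)
  show "(d' x y = 0) = (x = y)"
  proof
    assume "d' x y = 0" then show "x = y" using d'_pos[OF xy] by (cases "x = y") auto
  next
    assume "x = y" then show "d' x y = 0" using gdist_refl[OF F(1)] by (simp add: d'_def)
  qed
  show "d' x y = d' y x" using gdist_sym F by (simp add: d'_def)
next
  fix x y z assume xyz: "x \<in> Y" "y \<in> Y" "z \<in> Y"
  have F: "fst (node x) \<in> X" "fst (node y) \<in> X" "fst (node z) \<in> X" using node_fst xyz by auto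
  show "d' x z \<le> d' x y + d' y z" using gdist_triangle[OF F] by (simp add: d'_def)
qed

lemma iso_Y: "partial_isometry Y d' f'"
  unfolding partial_isometry_def
proof (intro conjI)
  have "dom f' \<subseteq> Y" using f'_Y by blast
  then show "finite (dom f')" "dom f' \<subseteq> Y" using finY finite_subset by auto
  show "ran f' \<subseteq> Y" using f'_Y by (auto simp: ran_def)
  show "\<forall>x\<in>dom f'. \<forall>y\<in>dom f'. d' (the (f' x)) (the (f' y)) = d' x y"
    using d'_iso by auto
  show "inj_on f' (dom f')"
  proof (rule inj_onI)
    fix x y assume xy: "x \<in> dom f'" "y \<in> dom f'" "f' x = f' y"
    then obtain v where v: "f' x = Some v" "f' y = Some v" by auto
    have "d' x y = d' v v" using d'_iso[OF v] by simp
    moreover have Y: "v \<in> Y" "x \<in> Y" "y \<in> Y" using f'_Y v by blast+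
    moreover have "d' v v = 0" using gdist_refl[OF node_fst[OF Y(1)]] by (simp add: d'_def)
    ultimately have "d' x y = 0" by simp
    then show "x = y" using d'_pos[OF Y(2,3)] by (cases "x = y") auto
  qed
qed

end

context unroll_ext begin

lemma pit_ext_in_X: "pit f' n x = Some y \<Longrightarrow> x \<in> X \<Longrightarrow> y \<in> X \<Longrightarrow> pit f n x = Some y"
proof (induction n arbitrary: y)
  case 0 then show ?case by simp
next
  case (Suc n)
  obtain w where w: "pit f' n x = Some w" "f' w = Some y" using pit_SucE[OF Suc.prems(1)] by blast
  have wY: "w \<in> Y" using f'_Y w(2) by blast
  show ?case
  proof (rule Y_cases[OF wY])
    assume wX: "w \<in> X"
    show ?thesis
    proof (rule X_cases[OF wX])
      assume wd: "w \<in> dom f"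
      then have "f w = Some y" using w(2) f'_dom by simp
      then show ?thesis using Suc.IH[OF w(1) Suc.prems(2) wX] by simp
    next
      assume we: "w \<in> E"
      then have "y = \<nu> (w, 1)" "(w, 1) \<in> P" using w(2) f'_E N1 by (auto simp: P_def)
      then show ?thesis using Suc.prems(3) nu_notX by blast
    qed
  next
    fix e t assume et: "(e, t) \<in> P" "w = \<nu> (e, t)"
    then have "t < N" "y = \<nu> (e, Suc t)" using w(2) f'_nu by (auto split: if_splits)
    then have "(e, Suc t) \<in> P" "y = \<nu> (e, Suc t)" using et by (auto simp: P_def)
    then show ?thesis using Suc.prems(3) nu_notX by blast
  qed
qed

lemma nu_orbit: "(e, t) \<in> P \<Longrightarrow> pit f' n (\<nu> (e, t)) = Some y \<Longrightarrow> (e, t + n) \<in> P \<and> y = \<nu> (e, t + n)"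
proof (induction n arbitrary: y)
  case 0 then show ?case by simp
next
  case (Suc n)
  obtain w where w: "pit f' n (\<nu> (e, t)) = Some w" "f' w = Some y" using pit_SucE[OF Suc.prems(2)] by blast
  have IH: "(e, t + n) \<in> P" "w = \<nu> (e, t + n)" using Suc.IH[OF Suc.prems(1) w(1)] by auto
  then have "t + n < N" "y = \<nu> (e, Suc (t + n))" using w(2) f'_nu by (auto split: if_splits)
  then show ?case using IH by (auto simp: P_def)
qed

text \<open>No new periodic points: an f'-orbit that leaves X never returns.\<close>

lemma Per_ext: "Per f' = Per f"
proof
  show "Per f \<subseteq> Per f'"
  proof
    fix x assume "x \<in> Per f"
    then obtain n where n: "x \<in> dom f" "n > 0" "pit f n x = Some x" by (auto simp: Per_def)
    then have "pit f' n x = Some x" using pit_mono[OF map_le_f'] by blast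
    moreover have "x \<in> dom f'" using n(1) f'_dom[OF n(1)] by auto
    ultimately show "x \<in> Per f'" using n(2) by (auto simp: Per_def)
  qed
next
  show "Per f' \<subseteq> Per f"
  proof
    fix x assume "x \<in> Per f'"
    then obtain n where n: "x \<in> dom f'" "n > 0" "pit f' n x = Some x" by (auto simp: Per_def)
    have xY: "x \<in> Y" using n(1) f'_Y by blast
    show "x \<in> Per f"
    proof (rule Y_cases[OF xY])
      assume xX: "x \<in> X"
      then have p: "pit f n x = Some x" using pit_ext_in_X n(3) by blast
      moreover have "x \<in> dom f" using pit_pos_dom[OF n(2), of f x] p by simp
      ultimately show ?thesis using n(2) by (auto simp: Per_def)
    next
      fix e t assume et: "(e, t) \<in> P" "x = \<nu> (e, t)"
      then have "(e, t + n) \<in> P" "\<nu> (e, t) = \<nu> (e, t + n)" using nu_orbit n(3) by auto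
      then have "(e, t) = (e, t + n)" using nuinj et(1) unfolding inj_on_def by blast
      then show ?thesis using n(2) by simp
    qed
  qed
qed

lemma Fix_ext: "Fix f' = Fix f"
proof
  show "Fix f \<subseteq> Fix f'" using map_le_f' unfolding Fix_def map_le_def by force
  show "Fix f' \<subseteq> Fix f" using Fix_sub_Per[of f'] Per_ext Per_Fix by blast
qed

lemma pit_ext_orbit: "x \<in> X \<Longrightarrow> n \<le> N \<Longrightarrow> \<exists>w. pit f' n x = Some w \<and> w \<in> Y \<and> gdist (node w) (x, int n) = 0 \<and>
    (w \<in> X \<or> (\<exists>e t. (e, t) \<in> P \<and> w = \<nu> (e, t) \<and> t \<le> n))"
proof (induction n)
  case 0 then show ?case using XY gdist_refl by (auto simp: node_X)
next
  case (Suc n)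
  then obtain w where w: "pit f' n x = Some w" "w \<in> Y" "gdist (node w) (x, int n) = 0"
    "w \<in> X \<or> (\<exists>e t. (e, t) \<in> P \<and> w = \<nu> (e, t) \<and> t \<le> n)" by auto
  obtain w' where w': "f' w = Some w'" "w' \<in> X \<or> (\<exists>e t. (e, t) \<in> P \<and> w' = \<nu> (e, t) \<and> t \<le> Suc n)"
  proof (cases "w \<in> X")
    case wX: True
    show ?thesis
    proof (rule X_cases[OF wX])
      assume "w \<in> dom f"
      then obtain v where v: "f w = Some v" by auto
      then have "f' w = Some v" "v \<in> X" using f'_dom[OF \<open>w \<in> dom f\<close>] fX by auto
      then show ?thesis using that by blast
    next
      assume we: "w \<in> E"
      then have "(w, 1) \<in> P" using N1 by (simp add: P_def)
      then show ?thesis using that[of "\<nu> (w, 1)"] f'_E[OF we] by auto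
    qed
  next
    case False
    then obtain e t where et: "(e, t) \<in> P" "w = \<nu> (e, t)" "t \<le> n" using w(4) by auto
    then have "t < N" using Suc.prems by simp
    then have "(e, Suc t) \<in> P" "f' w = Some (\<nu> (e, Suc t))" using et f'_nu by (auto simp: P_def)
    then show ?thesis using that[of "\<nu> (e, Suc t)"] et(3) by auto
  qed
  have w'Y: "w' \<in> Y" using f'_Y w'(1) by blast
  have F: "fst (node w') \<in> X" "fst (node w) \<in> X" "x \<in> X" using node_fst w'Y w(2) Suc.prems by auto
  have "gdist (node w') (x, int (Suc n)) \<le> gdist (node w') (shift 1 (node w)) + gdist (shift 1 (node w)) (x, int (Suc n))"
    using gdist_triangle[of "node w'" "shift 1 (node w)" "(x, int (Suc n))"] F by (simp add: shift_def)
  moreover have "gdist (node w') (shift 1 (node w)) = 0" using node_step[OF w'(1)] .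
  moreover have "gdist (shift 1 (node w)) (x, int (Suc n)) = gdist (node w) (x, int n)"
    using gdist_shift[of "node w" "(x, int n)" 1] F by (simp add: shift_def add.commute)
  ultimately have "gdist (node w') (x, int (Suc n)) \<le> 0" using w(3) by simp
  moreover have "0 \<le> gdist (node w') (x, int (Suc n))" using gdist_nonneg F by simp
  ultimately show ?case using w w' w'Y by auto
qed

lemma d'_far: assumes "x \<in> X" "y \<in> X"
  shows "pit f' N x \<noteq> None \<and> the (pit f' N x) \<in> Y \<and>
    min (via_fix x y) (\<delta> * (real N / real (card X + 1) - 2)) \<le> d' (the (pit f' N x)) y"
proof -
  obtain w where w: "pit f' N x = Some w" "w \<in> Y" "gdist (node w) (x, int N) = 0" using pit_ext_orbit[OF assms(1)] by blast
  have F: "fst (node w) \<in> X" using node_fst w(2) by blast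
  have "d' w y = gdist (x, int N) (y, 0)" using gdist_zero_replace[OF F _ _ w(3)] assms by (simp add: d'_def node_X)
  then show ?thesis using gdist_far[OF assms] w by simp
qed

lemma d'_sg: "u \<in> Y \<Longrightarrow> v \<in> Y \<Longrightarrow> d' u v \<in> add_semigroup_gen dist_set"
  using gdist_semigroup node_fst by (simp add: d'_def)

lemma d'_fix: assumes "y \<in> Y" shows "\<exists>x\<in>X. \<forall>z\<in>Fix f. d' z y = d z x"
proof (rule Y_cases[OF assms])
  assume "y \<in> X" then show ?thesis using d'_X FixX by blast
next
  fix e t assume et: "(e, t) \<in> P" "y = \<nu> (e, t)"
  have eX: "e \<in> X" using et EX by (auto simp: P_def)
  have "d' z y = d z e" if z: "z \<in> Fix f" for z
  proof -
    have zX: "z \<in> X" using FixX z by blast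
    have "gdist (z, 0) (e, int t) = gdist (z, int t) (e, int t)"
      using gdist_zero_replace[of "(z,0)" "(z, int t)" "(e, int t)"] gdist_fixed_column[OF z, of 0 "int t"] zX eX by simp
    then show ?thesis using gdist_layer zX eX et node_nu by (simp add: d'_def node_X)
  qed
  then show ?thesis using eX by blast
qed

end

lemma exists_fresh:
  fixes S :: "'c set" and X :: "'b set"
  assumes "finite S" "finite X" "infinite (UNIV :: 'b set)"
  shows "\<exists>g. inj_on g S \<and> g ` S \<inter> X = {}"
proof -
  have "infinite (UNIV - X)" using Diff_infinite_finite[OF assms(2,3)] .
  then obtain T where T: "T \<subseteq> UNIV - X" "finite T" "card T = card S"
    using infinite_arbitrarily_large[of "UNIV - X" "card S"] by blast
  have "card S = card T" using T(3) by simp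
  then obtain g where "bij_betw g S T" using finite_same_card_bij[OF assms(1) T(2)] by blast
  then show ?thesis using T unfolding bij_betw_def by blast
qed

locale unrolling =
  fixes X :: "'b set" and d :: "'b \<Rightarrow> 'b \<Rightarrow> real" and f :: "'b \<rightharpoonup> 'b" and \<delta> :: real and N :: nat
    and Y' :: "'b set" and d' :: "'b \<Rightarrow> 'b \<Rightarrow> real" and f' :: "'b \<rightharpoonup> 'b"
  assumes finite_ext: "finite Y'" and subset_ext: "X \<subseteq> Y'" and metric_ext: "metric_on Y' d'"
    and dist_ext: "\<And>a b. a \<in> X \<Longrightarrow> b \<in> X \<Longrightarrow> d' a b = d a b"
    and iso_ext: "partial_isometry Y' d' f'" and map_ext: "f \<subseteq>\<^sub>m f'"
    and Per_ext: "Per f' = Per f" and Fix_ext: "Fix f' = Fix f"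
    and pit_ext: "\<And>x. x \<in> X \<Longrightarrow> pit f' N x \<noteq> None \<and> the (pit f' N x) \<in> Y'"
    and semigroup_ext: "\<And>u v. u \<in> Y' \<Longrightarrow> v \<in> Y' \<Longrightarrow> d' u v \<in> add_semigroup_gen {d a b | a b. a \<in> X \<and> b \<in> X}"
    and fix_view_ext: "\<And>y. y \<in> Y' \<Longrightarrow> \<exists>x\<in>X. \<forall>z\<in>Fix f. d' z y = d z x"
    and far_ext: "\<And>x y. x \<in> X \<Longrightarrow> y \<in> X \<Longrightarrow>
      min (Min ((\<lambda>z. d x z + d z y) ` Fix f)) (\<delta> * (real N / real (card X + 1) - 2))
        \<le> d' (the (pit f' N x)) y"

theorem unroll:
  fixes X :: "'b set"
  assumes "infinite (UNIV :: 'b set)" and "unroll_base X d f \<delta>" and "N \<ge> 1"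
  shows "\<exists>Y' d' f'. unrolling X d f \<delta> N Y' d' f'"
proof -
  interpret unroll_base X d f \<delta> by (rule assms(2))
  have "finite ((X - dom f) \<times> {1..N})" using finX by simp
  from exists_fresh[OF this finX assms(1)] obtain \<nu> :: "'b \<times> nat \<Rightarrow> 'b"
    where fresh: "inj_on \<nu> ((X - dom f) \<times> {1..N})" "\<nu> ` ((X - dom f) \<times> {1..N}) \<inter> X = {}"
    by blast
  interpret ext: unroll_ext X d f \<delta> N \<nu>
    by (rule unroll_ext.intro[OF assms(2)], rule unroll_ext_axioms.intro) (use assms(3) fresh in auto)
  have "unrolling X d f \<delta> N ext.Y ext.d' ext.f'"
  proof
    show "finite ext.Y" "X \<subseteq> ext.Y" "metric_on ext.Y ext.d'" "partial_isometry ext.Y ext.d' ext.f'"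
      "f \<subseteq>\<^sub>m ext.f'" "Per ext.f' = Per f" "Fix ext.f' = Fix f"
      by (fact ext.finY ext.XY ext.metric_Y ext.iso_Y ext.map_le_f' ext.Per_ext ext.Fix_ext)+
    show "ext.d' a b = d a b" if "a \<in> X" "b \<in> X" for a b
      using that by (rule ext.d'_X)
    show "pit ext.f' N x \<noteq> None \<and> the (pit ext.f' N x) \<in> ext.Y" if "x \<in> X" for x
      using ext.d'_far[OF that that] by blast
    show "ext.d' u v \<in> add_semigroup_gen {d a b | a b. a \<in> X \<and> b \<in> X}" if "u \<in> ext.Y" "v \<in> ext.Y" for u v
      using ext.d'_sg[OF that] by (simp add: dist_set_def)
    show "\<exists>x\<in>X. \<forall>z\<in>Fix f. ext.d' z y = d z x" if "y \<in> ext.Y" for y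
      using that by (rule ext.d'_fix)
    show "min (Min ((\<lambda>z. d x z + d z y) ` Fix f)) (\<delta> * (real N / real (card X + 1) - 2))
        \<le> ext.d' (the (pit ext.f' N x)) y" if "x \<in> X" "y \<in> X" for x y
      using ext.d'_far[OF that] by (simp add: via_fix_def)
  qed
  then show ?thesis by blast
qed
section \<open>Copying A into a space with room for new points\<close>

definition lift_map :: "('a \<rightharpoonup> 'a) \<Rightarrow> ('a + nat \<rightharpoonup> 'a + nat)" where
  "lift_map p u = (case u of Inl a \<Rightarrow> map_option Inl (p a) | Inr _ \<Rightarrow> None)"

definition lift_dist :: "('a \<Rightarrow> 'a \<Rightarrow> real) \<Rightarrow> 'a + nat \<Rightarrow> 'a + nat \<Rightarrow> real" where
  "lift_dist dA u v = (case (u, v) of (Inl a, Inl b) \<Rightarrow> dA a b | _ \<Rightarrow> 0)"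

lemma lift_map_Inl: "lift_map p (Inl a) = map_option Inl (p a)" by (simp add: lift_map_def)
lemma lift_map_Inr: "lift_map p (Inr k) = None" by (simp add: lift_map_def)

lemma pit_lift_map_Inl: "pit (lift_map p) n (Inl a) = map_option Inl (pit p n a)"
proof (induction n)
  case 0 then show ?case by simp
next
  case (Suc n) then show ?case by (cases "pit p n a") (auto simp: lift_map_Inl)
qed

lemma dom_lift_map: "dom (lift_map p) = Inl ` dom p"
proof
  show "dom (lift_map p) \<subseteq> Inl ` dom p"
  proof
    fix u :: "'a + nat" assume "u \<in> dom (lift_map p)"
    then show "u \<in> Inl ` dom p" by (cases u) (auto simp: lift_map_Inl lift_map_Inr dom_def)
  qed
  show "Inl ` dom p \<subseteq> dom (lift_map p)" by (auto simp: lift_map_Inl)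
qed

lemma Fix_lift_map: "Fix (lift_map p) = Inl ` Fix p"
proof
  show "Fix (lift_map p) \<subseteq> Inl ` Fix p"
  proof
    fix u :: "'a + nat" assume "u \<in> Fix (lift_map p)"
    then show "u \<in> Inl ` Fix p" by (cases u) (auto simp: Fix_def lift_map_Inl lift_map_Inr)
  qed
  show "Inl ` Fix p \<subseteq> Fix (lift_map p)" by (auto simp: Fix_def lift_map_Inl)
qed

lemma Per_lift_map: "Per (lift_map p) = Inl ` Per p"
proof
  show "Per (lift_map p) \<subseteq> Inl ` Per p"
  proof
    fix u :: "'a + nat" assume u: "u \<in> Per (lift_map p)"
    then obtain a where a: "u = Inl a" "a \<in> dom p" using dom_lift_map[of p] by (auto simp: Per_def)
    then obtain n where "n > 0" "pit (lift_map p) n u = Some u" using u by (auto simp: Per_def)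
    then have "pit p n a = Some a" using a pit_lift_map_Inl[of p n a] by auto
    then show "u \<in> Inl ` Per p" using a \<open>n > 0\<close> by (auto simp: Per_def)
  qed
  show "Inl ` Per p \<subseteq> Per (lift_map p)"
  proof
    fix u :: "'a + nat" assume "u \<in> Inl ` Per p"
    then obtain a n where "u = Inl a" "a \<in> dom p" "n > 0" "pit p n a = Some a" by (auto simp: Per_def)
    then show "u \<in> Per (lift_map p)" using pit_lift_map_Inl[of p n a] dom_lift_map[of p] by (auto simp: Per_def)
  qed
qed

lemma metric_lift_dist: "metric_on A dA \<Longrightarrow> metric_on (Inl ` A) (lift_dist dA)"
  unfolding metric_on_def lift_dist_def by auto

lemma partial_isometry_lift: assumes "partial_isometry A dA p" shows "partial_isometry (Inl ` A) (lift_dist dA) (lift_map p)"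
  unfolding partial_isometry_def
proof (intro conjI)
  have dp: "finite (dom p)" "dom p \<subseteq> A" "ran p \<subseteq> A" "inj_on p (dom p)"
    "\<forall>x\<in>dom p. \<forall>y\<in>dom p. dA (the (p x)) (the (p y)) = dA x y"
    using assms unfolding partial_isometry_def by auto
  show "finite (dom (lift_map p))" "dom (lift_map p) \<subseteq> Inl ` A" using dp by (auto simp: dom_lift_map)
  show "ran (lift_map p) \<subseteq> Inl ` A"
  proof
    fix v :: "'a + nat" assume "v \<in> ran (lift_map p)"
    then obtain u where "lift_map p u = Some v" by (auto simp: ran_def)
    then obtain a b where "u = Inl a" "p a = Some b" "v = Inl b" by (cases u) (auto simp: lift_map_Inl lift_map_Inr)
    then show "v \<in> Inl ` A" using dp(3) by (auto simp: ran_def)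
  qed
  show "inj_on (lift_map p) (dom (lift_map p))"
  proof (rule inj_onI)
    fix x y assume xy: "x \<in> dom (lift_map p)" "y \<in> dom (lift_map p)" "lift_map p x = lift_map p y"
    then obtain a b where ab: "x = Inl a" "y = Inl b" "a \<in> dom p" "b \<in> dom p" by (auto simp: dom_lift_map)
    then have "p a = p b" using xy(3) by (auto simp: lift_map_Inl option.map_sel domD)
    then show "x = y" using dp(4) ab unfolding inj_on_def by auto
  qed
  show "\<forall>x\<in>dom (lift_map p). \<forall>y\<in>dom (lift_map p). lift_dist dA (the (lift_map p x)) (the (lift_map p y)) = lift_dist dA x y"
  proof (intro ballI)
    fix x y assume xy: "x \<in> dom (lift_map p)" "y \<in> dom (lift_map p)"
    then obtain a b where ab: "x = Inl a" "y = Inl b" "a \<in> dom p" "b \<in> dom p" by (auto simp: dom_lift_map)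
    then obtain a' b' where ab': "p a = Some a'" "p b = Some b'" by auto
    have "dA (the (p a)) (the (p b)) = dA a b" using dp(5) ab(3,4) by blast
    then show "lift_dist dA (the (lift_map p x)) (the (lift_map p y)) = lift_dist dA x y"
      using ab ab' by (auto simp: lift_map_Inl lift_dist_def)
  qed
qed

lemma lift_map_le: "lift_map p \<subseteq>\<^sub>m g \<Longrightarrow> x \<in> dom p \<Longrightarrow> g (Inl x) = map_option Inl (p x)"
  unfolding map_le_def by (auto simp: dom_lift_map lift_map_Inl)

lemma infinite_UNIV_sum_nat: "infinite (UNIV :: ('a + nat) set)"
proof
  assume "finite (UNIV :: ('a + nat) set)"
  then have "finite (range (Inr :: nat \<Rightarrow> 'a + nat))" by (rule finite_subset[rotated]) simp
  then show False using finite_imageD[of Inr "UNIV :: nat set"] by (simp add: inj_on_def)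
qed

lemma partial_isometry_superspace: "partial_isometry Y d g \<Longrightarrow> Y \<subseteq> Y1 \<Longrightarrow> (\<forall>a\<in>Y. \<forall>b\<in>Y. d1 a b = d a b) \<Longrightarrow> partial_isometry Y1 d1 g"
  unfolding partial_isometry_def
proof (elim conjE, intro conjI)
  assume a: "finite (dom g)" "dom g \<subseteq> Y" "ran g \<subseteq> Y" "inj_on g (dom g)"
    "\<forall>x\<in>dom g. \<forall>y\<in>dom g. d (the (g x)) (the (g y)) = d x y" "Y \<subseteq> Y1" "\<forall>a\<in>Y. \<forall>b\<in>Y. d1 a b = d a b"
  show "finite (dom g)" "dom g \<subseteq> Y1" "ran g \<subseteq> Y1" "inj_on g (dom g)" using a by auto
  show "\<forall>x\<in>dom g. \<forall>y\<in>dom g. d1 (the (g x)) (the (g y)) = d1 x y"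
  proof (intro ballI)
    fix x y assume xy: "x \<in> dom g" "y \<in> dom g"
    have "the (g x) \<in> Y" "the (g y) \<in> Y" using xy a(3) by (auto simp: ran_def)
    moreover have "x \<in> Y" "y \<in> Y" using xy a(2) by auto
    ultimately show "d1 (the (g x)) (the (g y)) = d1 x y" using a(5,7) xy by metis
  qed
qed

section \<open>Alternating unrolling of p and q\<close>

locale amalgam_setting =
  fixes A :: "'a set" and dA :: "'a \<Rightarrow> 'a \<Rightarrow> real" and p q :: "'a \<rightharpoonup> 'a" and \<delta> :: real
  assumes finA: "finite A" and metA: "metric_on A dA"
    and iso_p: "partial_isometry A dA p" and iso_q: "partial_isometry A dA q"
    and Per_p: "Per p = Fix p" and Per_q: "Per q = Fix q" and Fix_pq_ne: "Fix p \<inter> Fix q \<noteq> {}"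
    and dpos: "\<delta> > 0" and dist_ge_delta: "\<And>a b. a \<in> A \<Longrightarrow> b \<in> A \<Longrightarrow> a \<noteq> b \<Longrightarrow> \<delta> \<le> dA a b"
begin

definition F :: "'a set" where "F = Fix p \<inter> Fix q"

definition SG :: "real set" where "SG = add_semigroup_gen {dA a b | a b. a \<in> A \<and> b \<in> A}"

definition amalgam_dist :: "('a + nat \<Rightarrow> 'a + nat \<Rightarrow> real) \<Rightarrow> 'a \<Rightarrow> 'a + nat \<Rightarrow> real" where
  "amalgam_dist d a y = Min ((\<lambda>z. dA a z + d (Inl z) y) ` F)"

lemma Fix_p_A: "Fix p \<subseteq> A" using iso_p unfolding partial_isometry_def Fix_def by auto
lemma Fix_q_A: "Fix q \<subseteq> A" using iso_q unfolding partial_isometry_def Fix_def by auto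
lemma F_A: "F \<subseteq> A" using Fix_p_A by (auto simp: F_def)
lemma finite_F: "finite F" using F_A finA finite_subset by blast
lemma F_ne: "F \<noteq> {}" using Fix_pq_ne by (simp add: F_def)
lemma finite_Fix_p: "finite (Fix p)" using Fix_p_A finA finite_subset by blast
lemma finite_Fix_q: "finite (Fix q)" using Fix_q_A finA finite_subset by blast

lemma amalgam_dist_le: "z \<in> F \<Longrightarrow> amalgam_dist d a y \<le> dA a z + d (Inl z) y"
  unfolding amalgam_dist_def using finite_F by (auto intro: Min_le)

lemma amalgam_dist_attained: "\<exists>z\<in>F. amalgam_dist d a y = dA a z + d (Inl z) y"
proof -
  have "amalgam_dist d a y \<in> (\<lambda>z. dA a z + d (Inl z) y) ` F"
    unfolding amalgam_dist_def using Min_in finite_F F_ne by blast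
  then show ?thesis by auto
qed

lemma SG_lower: "x \<in> SG \<Longrightarrow> x = 0 \<or> \<delta> \<le> x"
  unfolding SG_def
proof (rule add_semigroup_gen_lower[OF _ _ dpos])
  show "\<forall>g\<in>{dA a b | a b. a \<in> A \<and> b \<in> A}. g = 0 \<or> \<delta> \<le> g"
    using dist_ge_delta metA unfolding metric_on_def by fastforce
qed

lemma SG_closed:
  "(\<forall>u\<in>Y. \<forall>v\<in>Y. d u v \<in> SG) \<Longrightarrow> x \<in> add_semigroup_gen {d a b | a b. a \<in> Y \<and> b \<in> Y} \<Longrightarrow> x \<in> SG"
  unfolding SG_def by (rule add_semigroup_gen_mono) auto

lemma SG_unrolling:
  assumes "unrolling Y d g \<delta>' N Y' d' g'" "\<forall>u\<in>Y. \<forall>v\<in>Y. d u v \<in> SG" "u \<in> Y'" "v \<in> Y'"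
  shows "d' u v \<in> SG"
  using SG_closed[OF assms(2) unrolling.semigroup_ext[OF assms(1,3,4)]] .

lemma unroll_base_SG:
  assumes "finite Y" "metric_on Y d" "partial_isometry Y d g" "Per g = Fix g" "Fix g \<noteq> {}"
    "\<forall>u\<in>Y. \<forall>v\<in>Y. d u v \<in> SG"
  shows "unroll_base Y d g \<delta>"
proof (rule unroll_base.intro)
  fix a b assume ab: "a \<in> Y" "b \<in> Y" "a \<noteq> b"
  then have "d a b \<noteq> 0" using assms(2) unfolding metric_on_def by auto
  then show "\<delta> \<le> d a b" using SG_lower assms(6) ab by blast
qed (use assms dpos in \<open>blast+\<close>)

end

locale stage = amalgam_setting +
  fixes m :: nat and w :: "(gen \<times> int) list" and Y :: "('a + nat) set"
    and d :: "'a + nat \<Rightarrow> 'a + nat \<Rightarrow> real" and pb qb :: "'a + nat \<rightharpoonup> 'a + nat"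
    and xs :: "'a \<Rightarrow> 'a + nat" and Yp :: "('a + nat) set"
  assumes finite_Y: "finite Y" and metric_Y: "metric_on Y d"
    and dist_A: "\<And>a b. a \<in> A \<Longrightarrow> b \<in> A \<Longrightarrow> d (Inl a) (Inl b) = dA a b"
    and iso_pb: "partial_isometry Y d pb" and iso_qb: "partial_isometry Y d qb"
    and ext_p: "lift_map p \<subseteq>\<^sub>m pb" and ext_q: "lift_map q \<subseteq>\<^sub>m qb"
    and Per_pb: "Per pb = Inl ` Fix p" and Fix_pb: "Fix pb = Inl ` Fix p"
    and Per_qb: "Per qb = Inl ` Fix q" and Fix_qb: "Fix qb = Inl ` Fix q"
    and dist_SG: "\<And>u v. u \<in> Y \<Longrightarrow> v \<in> Y \<Longrightarrow> d u v \<in> SG"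
    and view_F: "\<And>y. y \<in> Y \<Longrightarrow> \<exists>a\<in>A. \<forall>z\<in>F. d (Inl z) y = dA z a"
    and reduced: "reduced_word w" and starts_T: "w = [] \<or> fst (hd w) = T"
    and length_w: "length w = 2 * m" and exps_pos: "\<forall>g\<in>set w. 0 < snd g"
    and eval_w: "\<And>a. a \<in> A \<Longrightarrow> eval_word w pb qb (Inl a) = Some (xs a)"
    and xs_Y: "\<And>a. a \<in> A \<Longrightarrow> xs a \<in> Y"
    and xs_F: "\<And>a z. a \<in> A \<Longrightarrow> z \<in> F \<Longrightarrow> d (xs a) (Inl z) = dA a z"
    and Yp_Y: "Yp \<subseteq> Y" and A_Yp: "Inl ` A \<subseteq> Yp" and dom_pb_Yp: "dom pb \<subseteq> Yp"
    and far: "\<And>a y. a \<in> A \<Longrightarrow> y \<in> Yp \<Longrightarrow> min (amalgam_dist d a y) (real m * \<delta>) \<le> d (xs a) y"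

lemma (in amalgam_setting) stage_0:
  "stage A dA p q \<delta> 0 [] (Inl ` A) (lift_dist dA) (lift_map p) (lift_map q) Inl (Inl ` A)"
proof (rule stage.intro[OF amalgam_setting_axioms], rule stage_axioms.intro)
  show "metric_on (Inl ` A) (lift_dist dA)" using metric_lift_dist[OF metA] .
  show "partial_isometry (Inl ` A) (lift_dist dA) (lift_map p)" using partial_isometry_lift[OF iso_p] .
  show "partial_isometry (Inl ` A) (lift_dist dA) (lift_map q)" using partial_isometry_lift[OF iso_q] .
  show "Per (lift_map p) = Inl ` Fix p" "Per (lift_map q) = Inl ` Fix q"
    unfolding Per_lift_map Per_p Per_q by simp_all
  show "Fix (lift_map p) = Inl ` Fix p" "Fix (lift_map q) = Inl ` Fix q" by (simp_all add: Fix_lift_map)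
  show "lift_dist dA u v \<in> SG" if "u \<in> Inl ` A" "v \<in> Inl ` A" for u v
    using that unfolding SG_def by (auto simp: lift_dist_def intro!: add_semigroup_gen.base exI)
  show "reduced_word []" by (simp add: reduced_word_def)
  show "dom (lift_map p) \<subseteq> Inl ` A"
    using partial_isometry_lift[OF iso_p] unfolding partial_isometry_def by blast
  show "min (amalgam_dist (lift_dist dA) a y) (real 0 * \<delta>) \<le> lift_dist dA (Inl a) y"
    if "a \<in> A" "y \<in> Inl ` A" for a y
    using that metA unfolding metric_on_def by (auto simp: lift_dist_def min_le_iff_disj)
qed (use finA in \<open>auto simp: lift_dist_def\<close>)

context stage
begin

lemma A_Y: "Inl ` A \<subseteq> Y" using A_Yp Yp_Y by blast

lemma metric_Y_facts:
  "u \<in> Y \<Longrightarrow> v \<in> Y \<Longrightarrow> 0 \<le> d u v" "u \<in> Y \<Longrightarrow> d u u = 0"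
  "u \<in> Y \<Longrightarrow> v \<in> Y \<Longrightarrow> x \<in> Y \<Longrightarrow> d u x \<le> d u v + d v x"
  using metric_Y unfolding metric_on_def by blast+

lemma amalgam_dist_cong:
  assumes "\<And>z. z \<in> F \<Longrightarrow> d' (Inl z) y = d'' (Inl z) y"
  shows "amalgam_dist d' a y = amalgam_dist d'' a y"
  unfolding amalgam_dist_def using assms by (intro arg_cong[where f = Min] image_cong) auto

text \<open>Either z' = z lies in F, or the
  step from z' to z costs at least \<open>\<delta>\<close> and the invariant applies at z'.\<close>
lemma far_via_fixed_points:
  assumes ext: "Y \<subseteq> Y'" "metric_on Y' d'" "\<And>u v. u \<in> Y \<Longrightarrow> v \<in> Y \<Longrightarrow> d' u v = d u v"
    and a: "a \<in> A" and z': "z' \<in> Inl ` Fix p" and z: "z \<in> Inl ` Fix q" and y: "y \<in> Y'"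
  shows "min (amalgam_dist d' a y) (real (Suc m) * \<delta>) \<le> d (xs a) z' + d z' z + d' z y"
proof -
  have zY: "z \<in> Y" "z' \<in> Y" using z z' Fix_p_A Fix_q_A A_Y by auto
  have z'Yp: "z' \<in> Yp" using z' Fix_p_A A_Yp by auto
  have d'_zy: "0 \<le> d' z y" using ext(2) zY(1) ext(1) y unfolding metric_on_def by blast
  show ?thesis
  proof (cases "z' = z")
    case True
    then obtain c where c: "c \<in> F" "z = Inl c" using z z' by (auto simp: F_def)
    have "amalgam_dist d' a y \<le> dA a c + d' z y" using amalgam_dist_le[OF c(1)] c(2) by simp
    also have "\<dots> = d (xs a) z' + d z' z + d' z y"
      using xs_F[OF a c(1)] c True metric_Y_facts(2) zY by simp
    finally show ?thesis by (simp add: min_le_iff_disj)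
  next
    case False
    have "d z' z \<noteq> 0" using False metric_Y zY unfolding metric_on_def by auto
    then have step: "\<delta> \<le> d z' z" using SG_lower dist_SG zY by blast
    consider "real m * \<delta> \<le> d (xs a) z'" | "amalgam_dist d a z' \<le> d (xs a) z'"
      using far[OF a z'Yp] by linarith
    then show ?thesis
    proof cases
      case 1
      then show ?thesis using step d'_zy by (simp add: algebra_simps min_le_iff_disj)
    next
      case 2
      obtain c where c: "c \<in> F" "amalgam_dist d a z' = dA a c + d (Inl c) z'"
        using amalgam_dist_attained by blast
      have cY: "Inl c \<in> Y" using c(1) F_A A_Y by auto
      have tri: "d' u x \<le> d' u v + d' v x" if "u \<in> Y'" "v \<in> Y'" "x \<in> Y'" for u v x
        using ext(2) that unfolding metric_on_def by blast
      have "d' (Inl c) y \<le> d' (Inl c) z' + d' z' y" "d' z' y \<le> d' z' z + d' z y"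
        using tri ext(1) cY zY y by (meson subsetD)+
      have "amalgam_dist d' a y \<le> dA a c + d' (Inl c) y" by (rule amalgam_dist_le[OF c(1)])
      also have "\<dots> \<le> dA a c + (d' (Inl c) z' + d' z' z + d' z y)"
        using \<open>d' (Inl c) y \<le> d' (Inl c) z' + d' z' y\<close> \<open>d' z' y \<le> d' z' z + d' z y\<close> by linarith
      also have "\<dots> = amalgam_dist d a z' + d z' z + d' z y" using ext(3) cY zY c(2) by simp
      finally show ?thesis using 2 by (simp add: min_le_iff_disj)
    qed
  qed
qed

end

text \<open>A round unrolls pb for N1 steps and then qb for N2 steps; N1 and N2 are chosen so that the
  far bounds of the unrolling lemma become \<open>(m + 1) \<delta>\<close>.  The word grows by t^N2 s^N1.\<close>

context stage
begin

context
  fixes N1 N2 :: nat and Y1 Y2 :: "('a + nat) set" and d1 d2 :: "'a + nat \<Rightarrow> 'a + nat \<Rightarrow> real"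
    and pb1 qb2 :: "'a + nat \<rightharpoonup> 'a + nat"
  assumes N1_def: "N1 = (m + 3) * (card Y + 1)" and N2_def: "N2 = (m + 3) * (card Y1 + 1)"
    and unroll_pb: "unrolling Y d pb \<delta> N1 Y1 d1 pb1"
    and unroll_qb: "unrolling Y1 d1 qb \<delta> N2 Y2 d2 qb2"
begin

interpretation P: unrolling Y d pb \<delta> N1 Y1 d1 pb1 by (rule unroll_pb)
interpretation Q: unrolling Y1 d1 qb \<delta> N2 Y2 d2 qb2 by (rule unroll_qb)

definition xs1 :: "'a \<Rightarrow> 'a + nat" where "xs1 a = the (pit pb1 N1 (xs a))"
definition xs2 :: "'a \<Rightarrow> 'a + nat" where "xs2 a = the (pit qb2 N2 (xs1 a))"

lemma N1_bound: "\<delta> * (real N1 / real (card Y + 1) - 2) = real (Suc m) * \<delta>"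
  unfolding N1_def by (simp add: field_simps)

lemma N2_bound: "\<delta> * (real N2 / real (card Y1 + 1) - 2) = real (Suc m) * \<delta>"
  unfolding N2_def by (simp add: field_simps)

lemma N_pos: "0 < N1" "0 < N2" by (simp_all add: N1_def N2_def)

lemma xs1: "a \<in> A \<Longrightarrow> pit pb1 N1 (xs a) = Some (xs1 a) \<and> xs1 a \<in> Y1"
  using P.pit_ext xs_Y unfolding xs1_def by auto

lemma xs2: "a \<in> A \<Longrightarrow> pit qb2 N2 (xs1 a) = Some (xs2 a) \<and> xs2 a \<in> Y2"
  using Q.pit_ext xs1 unfolding xs2_def by auto

lemma d2_Y: assumes "u \<in> Y" "v \<in> Y" shows "d2 u v = d u v"
proof -
  have "u \<in> Y1" "v \<in> Y1" using assms P.subset_ext by auto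
  then show ?thesis using Q.dist_ext P.dist_ext assms by simp
qed

lemma A_Y1: "z \<in> A \<Longrightarrow> Inl z \<in> Y1" using A_Y P.subset_ext by auto

lemma F_Fix: "z \<in> F \<Longrightarrow> Inl z \<in> Fix pb \<and> Inl z \<in> Fix qb"
  using Fix_pb Fix_qb by (auto simp: F_def)

text \<open>Iterating pb1 and qb2 does not change distances to F.\<close>
lemma xs2_F: assumes "a \<in> A" "z \<in> F" shows "d2 (xs2 a) (Inl z) = dA a z"
proof -
  have zY: "Inl z \<in> Y" "Inl z \<in> Y1" using assms(2) F_A A_Y P.subset_ext by auto
  have "d2 (xs2 a) (Inl z) = d2 (xs1 a) (Inl z)"
    using pit_dist_fix[OF Q.iso_ext] xs2[OF assms(1)] F_Fix[OF assms(2)] Q.Fix_ext by auto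
  also have "\<dots> = d1 (xs1 a) (Inl z)" using Q.dist_ext xs1[OF assms(1)] zY by auto
  also have "\<dots> = d1 (xs a) (Inl z)"
    using pit_dist_fix[OF P.iso_ext] xs1[OF assms(1)] F_Fix[OF assms(2)] P.Fix_ext by auto
  also have "\<dots> = dA a z" using P.dist_ext xs_Y xs_F assms zY by simp
  finally show ?thesis .
qed

lemma far_via_Fix_qb:
  assumes a: "a \<in> A" and y: "y \<in> Y1" and z: "z \<in> Fix qb"
  shows "min (amalgam_dist d1 a y) (real (Suc m) * \<delta>) \<le> d1 (xs1 a) z + d1 z y"
proof -
  have zY: "z \<in> Y" using z Fix_qb Fix_q_A A_Y by auto
  have d1_zy: "0 \<le> d1 z y" using P.metric_ext zY P.subset_ext y unfolding metric_on_def by blast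
  have far1: "min (Min ((\<lambda>z'. d (xs a) z' + d z' z) ` Fix pb)) (real (Suc m) * \<delta>) \<le> d1 (xs1 a) z"
    using P.far_ext[OF xs_Y[OF a] zY] unfolding N1_bound xs1_def .
  show ?thesis
  proof (cases "real (Suc m) * \<delta> \<le> Min ((\<lambda>z'. d (xs a) z' + d z' z) ` Fix pb)")
    case True
    then show ?thesis using far1 d1_zy by (simp add: min_le_iff_disj)
  next
    case False
    have "Fix pb \<noteq> {}" "finite (Fix pb)" using Fix_pb F_ne finite_Fix_p by (auto simp: F_def)
    then have "Min ((\<lambda>z'. d (xs a) z' + d z' z) ` Fix pb) \<in> (\<lambda>z'. d (xs a) z' + d z' z) ` Fix pb"
      by (intro Min_in) auto
    then obtain z' where z': "z' \<in> Fix pb"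
      "Min ((\<lambda>z'. d (xs a) z' + d z' z) ` Fix pb) = d (xs a) z' + d z' z"
      by auto
    have "min (amalgam_dist d1 a y) (real (Suc m) * \<delta>) \<le> d (xs a) z' + d z' z + d1 z y"
      by (rule far_via_fixed_points[OF P.subset_ext P.metric_ext P.dist_ext a])
        (use z' z y Fix_pb Fix_qb in auto)
    then show ?thesis using far1 False z'(2) by linarith
  qed
qed

lemma far_xs2:
  assumes a: "a \<in> A" and y: "y \<in> Y1"
  shows "min (amalgam_dist d2 a y) (real (Suc m) * \<delta>) \<le> d2 (xs2 a) y"
proof -
  have "amalgam_dist d2 a y = amalgam_dist d1 a y"
    using Q.dist_ext y F_A A_Y1 by (intro amalgam_dist_cong) auto
  moreover have "Fix qb \<noteq> {}" "finite (Fix qb)" using Fix_qb F_ne finite_Fix_q by (auto simp: F_def)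
  ultimately have "min (amalgam_dist d2 a y) (real (Suc m) * \<delta>)
      \<le> Min ((\<lambda>z. d1 (xs1 a) z + d1 z y) ` Fix qb)"
    using far_via_Fix_qb[OF a y] by (auto intro: Min.boundedI)
  moreover have "min (Min ((\<lambda>z. d1 (xs1 a) z + d1 z y) ` Fix qb)) (real (Suc m) * \<delta>) \<le> d2 (xs2 a) y"
    using Q.far_ext[OF conjunct2[OF xs1[OF a]] y] unfolding N2_bound xs2_def .
  ultimately show ?thesis by linarith
qed

lemma round_stage:
  "stage A dA p q \<delta> (Suc m) ((T, int N2) # (S, int N1) # w) Y2 d2 pb1 qb2 xs2 Y1"
proof (rule stage.intro[OF amalgam_setting_axioms], rule stage_axioms.intro)
  show "partial_isometry Y2 d2 pb1"
    using partial_isometry_superspace[OF P.iso_ext Q.subset_ext] Q.dist_ext by blast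
  show "lift_map p \<subseteq>\<^sub>m pb1" using map_le_trans[OF ext_p P.map_ext] .
  show "lift_map q \<subseteq>\<^sub>m qb2" using map_le_trans[OF ext_q Q.map_ext] .
  have "\<forall>u\<in>Y1. \<forall>v\<in>Y1. d1 u v \<in> SG" using SG_unrolling[OF unroll_pb] dist_SG by blast
  then show "d2 u v \<in> SG" if "u \<in> Y2" "v \<in> Y2" for u v
    using SG_unrolling[OF unroll_qb] that by blast
  show "\<exists>a\<in>A. \<forall>z\<in>F. d2 (Inl z) y = dA z a" if y: "y \<in> Y2" for y
  proof -
    obtain y1 where y1: "y1 \<in> Y1" "\<forall>z\<in>Fix qb. d2 z y = d1 z y1" using Q.fix_view_ext[OF y] by blast
    obtain y0 where y0: "y0 \<in> Y" "\<forall>z\<in>Fix pb. d1 z y1 = d z y0" using P.fix_view_ext[OF y1(1)] by blast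
    obtain a where "a \<in> A" "\<forall>z\<in>F. d (Inl z) y0 = dA z a" using view_F[OF y0(1)] by blast
    then show ?thesis using y0 y1 F_Fix by (intro bexI) auto
  qed
  show "reduced_word ((T, int N2) # (S, int N1) # w)"
    using reduced_word_Cons2[OF reduced starts_T] N_pos by simp
  show "eval_word ((T, int N2) # (S, int N1) # w) pb1 qb2 (Inl a) = Some (xs2 a)" if "a \<in> A" for a
  proof -
    have "eval_word w pb1 qb2 (Inl a) = Some (xs a)"
      using eval_word_mono[OF exps_pos P.map_ext Q.map_ext eval_w[OF that]] .
    then show ?thesis using xs1[OF that] xs2[OF that] by (simp add: ppow_nat)
  qed
  show "dom pb1 \<subseteq> Y1" using P.iso_ext unfolding partial_isometry_def by blast
  show "finite Y2" "metric_on Y2 d2" "partial_isometry Y2 d2 qb2" "Y1 \<subseteq> Y2"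
    by (fact Q.finite_ext Q.metric_ext Q.iso_ext Q.subset_ext)+
  show "Per pb1 = Inl ` Fix p" "Fix pb1 = Inl ` Fix p" "Per qb2 = Inl ` Fix q" "Fix qb2 = Inl ` Fix q"
    using P.Per_ext P.Fix_ext Per_pb Fix_pb Q.Per_ext Q.Fix_ext Per_qb Fix_qb by simp_all
  show "d2 (Inl a) (Inl b) = dA a b" if "a \<in> A" "b \<in> A" for a b
    using that d2_Y[of "Inl a" "Inl b"] A_Y dist_A by auto
  show "(T, int N2) # (S, int N1) # w = [] \<or> fst (hd ((T, int N2) # (S, int N1) # w)) = T"
    "length ((T, int N2) # (S, int N1) # w) = 2 * Suc m"
    "\<forall>g\<in>set ((T, int N2) # (S, int N1) # w). 0 < snd g"
    using length_w exps_pos N_pos by auto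
  show "xs2 a \<in> Y2" if "a \<in> A" for a
    using xs2 that by blast
  show "d2 (xs2 a) (Inl z) = dA a z" if "a \<in> A" "z \<in> F" for a z
    using xs2_F that .
  show "Inl ` A \<subseteq> Y1" using A_Y1 by blast
  show "min (amalgam_dist d2 a y) (real (Suc m) * \<delta>) \<le> d2 (xs2 a) y" if "a \<in> A" "y \<in> Y1" for a y
    using far_xs2 that .
qed

end

lemma next_stage: "\<exists>w' Y' d' pb' qb' xs' Yp'. stage A dA p q \<delta> (Suc m) w' Y' d' pb' qb' xs' Yp'"
proof -
  define N1 where "N1 = (m + 3) * (card Y + 1)"
  have "unroll_base Y d pb \<delta>"
    using unroll_base_SG[OF finite_Y metric_Y iso_pb] Per_pb Fix_pb dist_SG Fix_pq_ne by auto
  then obtain Y1 d1 pb1 where u1: "unrolling Y d pb \<delta> N1 Y1 d1 pb1"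
    using unroll[OF infinite_UNIV_sum_nat] N1_def by fastforce
  interpret P: unrolling Y d pb \<delta> N1 Y1 d1 pb1 by (rule u1)
  define N2 where "N2 = (m + 3) * (card Y1 + 1)"
  have "partial_isometry Y1 d1 qb"
    using partial_isometry_superspace[OF iso_qb P.subset_ext] P.dist_ext by blast
  moreover have "\<forall>u\<in>Y1. \<forall>v\<in>Y1. d1 u v \<in> SG" using SG_unrolling[OF u1] dist_SG by blast
  moreover have "Fix qb \<noteq> {}" using Fix_qb Fix_pq_ne by auto
  ultimately have "unroll_base Y1 d1 qb \<delta>"
    using unroll_base_SG[OF P.finite_ext P.metric_ext] Per_qb Fix_qb by auto
  then obtain Y2 d2 qb2 where u2: "unrolling Y1 d1 qb \<delta> N2 Y2 d2 qb2"
    using unroll[OF infinite_UNIV_sum_nat] N2_def by fastforce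
  show ?thesis using round_stage[OF N1_def N2_def u1 u2] by blast
qed

end

section \<open>The free amalgam after sufficiently many rounds\<close>

lemma (in amalgam_setting) exists_stage: "\<exists>w Y d pb qb xs Yp. stage A dA p q \<delta> m w Y d pb qb xs Yp"
proof (induction m)
  case 0 then show ?case using stage_0 by blast
next
  case (Suc m) then show ?case using stage.next_stage by blast
qed

context stage
begin

text \<open>Once \<open>m \<delta>\<close> exceeds every path through F, the bound of the invariant is the amalgam
  distance, which is also an upper bound by the triangle inequality.\<close>
lemma free_amalgam:
  assumes Dm: "\<And>a b. a \<in> A \<Longrightarrow> b \<in> A \<Longrightarrow> dA a b \<le> Dm" and m: "2 * Dm \<le> real m * \<delta>"
    and a: "a \<in> A" and y: "y \<in> dom pb"
  shows "d (xs a) y = Min {d (xs a) z + d z y | z. z \<in> Inl ` (Fix p \<inter> Fix q)}"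
proof -
  have yY: "y \<in> Y" "y \<in> Yp" using y dom_pb_Yp Yp_Y by auto
  have set_eq: "{d (xs a) z + d z y | z. z \<in> Inl ` (Fix p \<inter> Fix q)} = (\<lambda>z. dA a z + d (Inl z) y) ` F"
    using xs_F[OF a] unfolding F_def by force
  have "amalgam_dist d a y \<le> real m * \<delta>"
  proof -
    obtain z0 where z0: "z0 \<in> F" using F_ne by auto
    obtain a' where a': "a' \<in> A" "\<forall>z\<in>F. d (Inl z) y = dA z a'" using view_F[OF yY(1)] by blast
    have "amalgam_dist d a y \<le> dA a z0 + dA z0 a'" using amalgam_dist_le[OF z0, of d a y] a'(2) z0 by simp
    also have "\<dots> \<le> 2 * Dm" using Dm[OF a, of z0] Dm[of z0 a'] a'(1) z0 F_A by auto
    finally show ?thesis using m by simp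
  qed
  then have lower: "amalgam_dist d a y \<le> d (xs a) y" using far[OF a yY(2)] by simp
  obtain c where c: "c \<in> F" "amalgam_dist d a y = dA a c + d (Inl c) y"
    using amalgam_dist_attained by blast
  have "d (xs a) y \<le> d (xs a) (Inl c) + d (Inl c) y"
    using metric_Y_facts(3)[OF xs_Y[OF a] _ yY(1)] c(1) F_A A_Y by auto
  also have "\<dots> = amalgam_dist d a y" using c xs_F[OF a] by simp
  finally show ?thesis using lower set_eq by (simp add: amalgam_dist_def)
qed

text \<open>All distances lie in SG, so enlarging Inl ` A inside Y keeps the minimal distance.\<close>
lemma den_stage:
  assumes "Z \<subseteq> Y" "Inl ` A \<subseteq> Z"
  shows "den Z d = den (Inl ` A) d"
proof (rule den_semigroup_extension)
  show "finite Z" using assms(1) finite_Y finite_subset by blast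
  show "metric_on Z d" using metric_on_subset[OF metric_Y assms(1)] .
  have "{d u v | u v. u \<in> Inl ` A \<and> v \<in> Inl ` A} = {dA a b | a b. a \<in> A \<and> b \<in> A}"
    using dist_A by force
  moreover have "d x y \<in> SG" if "x \<in> Z" "y \<in> Z" for x y
    using dist_SG that assms(1) by blast
  ultimately show "\<forall>x\<in>Z. \<forall>y\<in>Z. d x y \<in> add_semigroup_gen {d u v | u v. u \<in> Inl ` A \<and> v \<in> Inl ` A}"
    unfolding SG_def by simp
qed (rule assms(2))

lemma word_shape: assumes "0 < m" obtains K v where "w = (T, K) # v" "K \<noteq> 0"
proof -
  have "w \<noteq> []" using length_w assms by auto
  then obtain K v where w: "w = (T, K) # v" using starts_T by (cases w) auto
  then have "K \<noteq> 0" using reduced unfolding reduced_word_def by force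
  then show ?thesis using w that by blast
qed

end

theorem theorem4p13:
  fixes A :: "'a set" and dA :: "'a \<Rightarrow> 'a \<Rightarrow> real" and p q :: "'a \<rightharpoonup> 'a"
  assumes "finite A" and "metric_on A dA"
    and "partial_isometry A dA p" and "partial_isometry A dA q"
    and "Per p = Fix p" and "Per q = Fix q"
    and "Fix p \<inter> Fix q \<noteq> {}"
  shows "\<exists>(B :: ('a + nat) set) d pb qb K v.
    finite B \<and> metric_on B d \<and> Inl ` A \<subseteq> B \<and>
    (\<forall>a\<in>A. \<forall>b\<in>A. d (Inl a) (Inl b) = dA a b) \<and>
    partial_isometry B d pb \<and> partial_isometry B d qb \<and>
    (\<forall>x\<in>dom p. pb (Inl x) = map_option Inl (p x)) \<and>
    (\<forall>x\<in>dom q. qb (Inl x) = map_option Inl (q x)) \<and>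
    K \<noteq> 0 \<and> reduced_word ((T, K) # v) \<and>
    Per pb = Inl ` Per p \<and> Per qb = Inl ` Per q \<and>
    (\<forall>a\<in>A. eval_word ((T, K) # v) pb qb (Inl a) \<noteq> None) \<and>
    (\<forall>x\<in>(\<lambda>a. the (eval_word ((T, K) # v) pb qb (Inl a))) ` A. \<forall>y\<in>dom pb.
       d x y = Min {d x z + d z y | z. z \<in> Inl ` (Fix p \<inter> Fix q)}) \<and>
    (\<forall>x\<in>B. \<forall>y\<in>B. d x y \<in> add_semigroup_gen {dA a b | a b. a \<in> A \<and> b \<in> A}) \<and>
    den (dom pb \<union> Inl ` A) d = den (Inl ` A) d \<and>
    den (Inl ` A) d = den (dom qb \<union> Inl ` A) d"
proof -
  obtain \<delta> where \<delta>: "\<delta> > 0" "\<forall>a\<in>A. \<forall>b\<in>A. a \<noteq> b \<longrightarrow> \<delta> \<le> dA a b"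
    using metric_positive_lower_bound[OF assms(1,2)] by blast
  interpret amalgam_setting A dA p q \<delta> using assms \<delta> by unfold_locales auto
  define Dm where "Dm = Max ((\<lambda>(a, b). dA a b) ` (A \<times> A))"
  have Dm: "dA a b \<le> Dm" if "a \<in> A" "b \<in> A" for a b
    unfolding Dm_def using finA that by (auto intro!: Max_ge)
  define M where "M = nat \<lceil>2 * Dm / \<delta>\<rceil> + 1"
  have M: "0 < M" "2 * Dm \<le> real M * \<delta>"
    using \<delta>(1) unfolding M_def by (auto simp: pos_divide_le_eq[symmetric]) linarith
  obtain w Y d pb qb xs Yp where "stage A dA p q \<delta> M w Y d pb qb xs Yp" using exists_stage by blast
  then interpret stage A dA p q \<delta> M w Y d pb qb xs Yp .
  obtain K v where w: "w = (T, K) # v" "K \<noteq> 0" using word_shape[OF M(1)] .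
  have dom_Y: "dom pb \<subseteq> Y" "dom qb \<subseteq> Y" using iso_pb iso_qb unfolding partial_isometry_def by auto
  show ?thesis
  proof (intro exI conjI)
    show "\<forall>x\<in>(\<lambda>a. the (eval_word ((T, K) # v) pb qb (Inl a))) ` A. \<forall>y\<in>dom pb.
        d x y = Min {d x z + d z y | z. z \<in> Inl ` (Fix p \<inter> Fix q)}"
      using free_amalgam[OF Dm M(2)] eval_w w(1) by auto
  qed (use finite_Y metric_Y A_Y dist_A iso_pb iso_qb lift_map_le[OF ext_p] lift_map_le[OF ext_q]
      w reduced Per_pb Per_qb Per_p Per_q eval_w dist_SG den_stage[of "dom pb \<union> Inl ` A"]
      den_stage[of "dom qb \<union> Inl ` A"] dom_Y in \<open>auto simp: SG_def\<close>)
qed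

end
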